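(* Let $n\ge2$, let $P$ be the $n\times n$ grid MDP described in the context (horizon $H=2n-1$), and let $\mathbf 1$ denote the mean reward function with $r_h(s,a)=1$ for all $(h,s,a)$. Then there exist absolute constants $c_1,c_2>0$ (independent of $n$ and $L$) such that for all $L\in[H]$, $$\frac{c_1}{L}\le CR^L(P,\mathbf 1)\le\frac{c_2}{L}.$$
   Context: Grid MDP: the states are $s_{i,j}$, $i,j\in[n]$, where $i$ is the column (from the left) and $j$ is the row (from the bottom). There are two actions, "right" ($i\mapsto i+1$) and "up" ($j\mapsto j+1$), and all transitions are deterministic. The agent starts at $s_{1,1}$. At a state with $i<n$ and $j<n$, both moves are available. On the top row $j=n$ with $i<n$, both actions move right. On the rightmost column $i=n$ with $j<n$, both actions move up. The state $s_{n,n}$ is reached at step $2n-1=H$, and the episode ends after one action there. General framework: episodic tabular MDP with finite state space $\mathcal S$ ($|\mathcal S|=S$), finite action space $\mathcal A$ ($|\mathcal A|=A$), horizon $H$ and random non-negative rewards $R_h(s,a)$, $(h,s,a)\in\mathcal X=[H]\times\mathcal S\times\mathcal A$. Rewards are drawn before the interaction. The reward vectors $\mathcal R_h$ are independent across steps (possibly correlated within a step) and independent of transitions. $r_h(s,a)=\mathbb E[R_h(s,a)]$, and $\mathcal D(r)$ is the set of such reward distributions with means $r$. An $L$-lookahead policy chooses $a_h$ based on $h$, $s_h$ and the rewards $(\mathcal R_t)_{h\le t\le\min(h+L-1,H)}$. $V^{L,*}$ is the optimal expected total reward over such policies, and $L=0$ corresponds to Markovian policies. $CR^L(P,r)=\inf_{\mathcal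 D(r)}V^{0,*}/V^{L,*}$, with division by zero equal to $+\infty$. *)

theory Defs
  imports "HOL-Probability.Probability"
begin

datatype act = Right | Up

text \<open>States are pairs (i,j) with i the column and j the row, both in {1..n}.
  Horizon H = 2n - 1.\<close>

definition horizon :: "nat \<Rightarrow> nat" where
  "horizon n = 2 * n - 1"

definition grid_step :: "nat \<Rightarrow> nat \<times> nat \<Rightarrow> act \<Rightarrow> nat \<times> nat" where
  "grid_step n s a = (case s of (i, j) \<Rightarrow>
     if i < n \<and> j < n then (case a of Right \<Rightarrow> (i + 1, j) | Up \<Rightarrow> (i, j + 1))
     else if j = n \<and> i < n then (i + 1, j)
     else if i = n \<and> j < n then (i, j + 1)
     else (i, j))"

definition grid_X :: "nat \<Rightarrow> ((nat \<times> nat) \<times> act) set" where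
  "grid_X n = ({1..n} \<times> {1..n}) \<times> UNIV"

definition rew_space :: "nat \<Rightarrow> (((nat \<times> nat) \<times> act) \<Rightarrow> real) measure" where
  "rew_space n = Pi\<^sub>M (grid_X n) (\<lambda>_. borel)"

text \<open>D(r): families of per-step reward distributions (steps independent, arbitrary
  correlation within a step), nonnegative rewards, with means r.\<close>
definition reward_dists ::
  "nat \<Rightarrow> (nat \<Rightarrow> nat \<times> nat \<Rightarrow> act \<Rightarrow> real) \<Rightarrow>
     (nat \<Rightarrow> (((nat \<times> nat) \<times> act) \<Rightarrow> real) measure) set" where
  "reward_dists n r = {\<mu>. \<forall>h\<in>{1..horizon n}.
      prob_space (\<mu> h) \<and> sets (\<mu> h) = sets (rew_space n) \<and>
      (AE f in \<mu> h. \<forall>x\<in>grid_X n. 0 \<le> f x) \<and>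
      (\<forall>s a. (s, a) \<in> grid_X n \<longrightarrow>
          integrable (\<mu> h) (\<lambda>f. f (s, a)) \<and> (\<integral>f. f (s, a) \<partial>\<mu> h) = r h s a)}"

definition rew_seq ::
  "nat \<Rightarrow> (nat \<Rightarrow> (((nat \<times> nat) \<times> act) \<Rightarrow> real) measure) \<Rightarrow>
     (nat \<Rightarrow> ((nat \<times> nat) \<times> act) \<Rightarrow> real) measure" where
  "rew_seq n \<mu> = Pi\<^sub>M {1..horizon n} \<mu>"

type_synonym rseq = "nat \<Rightarrow> ((nat \<times> nat) \<times> act) \<Rightarrow> real"
type_synonym policy = "nat \<Rightarrow> nat \<times> nat \<Rightarrow> rseq \<Rightarrow> act"

text \<open>State trajectory: grid_traj n pi w k is the state at step k+1.\<close>
primrec grid_traj :: "nat \<Rightarrow> policy \<Rightarrow> rseq \<Rightarrow> nat \<Rightarrow> nat \<times> nat" where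
  "grid_traj n \<pi> \<omega> 0 = (1, 1)"
| "grid_traj n \<pi> \<omega> (Suc k) =
     grid_step n (grid_traj n \<pi> \<omega> k) (\<pi> (Suc k) (grid_traj n \<pi> \<omega> k) \<omega>)"

text \<open>L-lookahead (deterministic) policies: the action at step h, state s, is a measurable
  function of the rewards R_h, ..., R_{min(h+L-1,H)} only. L = 0 gives Markovian policies.\<close>
definition lookahead_policies ::
  "nat \<Rightarrow> nat \<Rightarrow> (nat \<Rightarrow> (((nat \<times> nat) \<times> act) \<Rightarrow> real) measure) \<Rightarrow> policy set" where
  "lookahead_policies n L \<mu> = {\<pi>. \<forall>h s.
      (\<pi> h s) \<in> measurable (rew_seq n \<mu>) (count_space UNIV) \<and>
      (\<forall>\<omega>\<in>space (rew_seq n \<mu>). \<forall>\<omega>'\<in>space (rew_seq n \<mu>).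
          (\<forall>t\<in>{h..min (h + L - 1) (horizon n)}. \<omega> t = \<omega>' t) \<longrightarrow> \<pi> h s \<omega> = \<pi> h s \<omega>')}"

definition policy_value ::
  "nat \<Rightarrow> (nat \<Rightarrow> (((nat \<times> nat) \<times> act) \<Rightarrow> real) measure) \<Rightarrow> policy \<Rightarrow> ennreal" where
  "policy_value n \<mu> \<pi> = (\<integral>\<^sup>+ \<omega>. ennreal (\<Sum>h\<in>{1..horizon n}.
       \<omega> h (grid_traj n \<pi> \<omega> (h - 1), \<pi> h (grid_traj n \<pi> \<omega> (h - 1)) \<omega>)) \<partial>rew_seq n \<mu>)"

definition opt_value ::
  "nat \<Rightarrow> nat \<Rightarrow> (nat \<Rightarrow> (((nat \<times> nat) \<times> act) \<Rightarrow> real) measure) \<Rightarrow> ennreal" where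
  "opt_value n L \<mu> = (SUP \<pi>\<in>lookahead_policies n L \<mu>. policy_value n \<mu> \<pi>)"

definition cr_div :: "ennreal \<Rightarrow> ennreal \<Rightarrow> ennreal" where
  "cr_div a b = (if b = 0 then \<top> else a / b)"

definition grid_CR :: "nat \<Rightarrow> nat \<Rightarrow> (nat \<Rightarrow> nat \<times> nat \<Rightarrow> act \<Rightarrow> real) \<Rightarrow> ennreal" where
  "grid_CR n L r = (INF \<mu>\<in>reward_dists n r. cr_div (opt_value n 0 \<mu>) (opt_value n L \<mu>))"

end

theory Submission
  imports Defs
begin

text \<open>
  Lower bound. All means are 1, so every Markovian policy collects exactly H. An L-lookahead
  policy is at step h within L - 1 moves of its position at step h - L, and that position is
  determined by the rewards of the steps before h. So the pair played at step h lies in a set of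
  at most 2L state-action pairs chosen independently of R_h, and step h pays at most 2L in
  expectation. Hence V^L \<le> 2LH and CR^L \<ge> 1/(2L).

  Upper bound. Take w \<approx> L/4 and cut the diagonal into blocks of 4w steps. The steps at offsets
  w, ..., 2w - 1 of a block are independent lotteries on w cells of their antidiagonal: with
  probability 1/w one uniformly chosen cell pays w^2 and the others 0, otherwise all w cells pay 0;
  every other reward is the constant 1. Looking 2w steps ahead, a policy can walk from the corner
  of the block to the first jackpot of the block and collect it. The first jackpot is at the d-th
  lottery with probability (1 - 1/w)^d / w, so a block pays at least w^2/2 in expectation. With
  about H/(4w) blocks, V^L \<ge> wH/8 roughly, and CR^L = H / V^L = O(1/L).
\<close>

subsection \<open>Trajectories of the grid\<close>

lemma UNIV_act: "(UNIV :: act set) = {Right, Up}"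
  using act.exhaust by auto

lemma finite_grid_X [simp]: "finite (grid_X n)"
  unfolding grid_X_def by (simp add: UNIV_act)

lemma fst_grid_step: "fst (grid_step n s a) = fst s \<or> fst (grid_step n s a) = Suc (fst s)"
  by (auto simp: grid_step_def split: prod.splits act.splits)

lemma grid_traj_in_grid:
  assumes "1 \<le> n" "k \<le> 2 * n - 2"
  shows "1 \<le> fst (grid_traj n \<pi> \<omega> k) \<and> fst (grid_traj n \<pi> \<omega> k) \<le> n \<and>
         1 \<le> snd (grid_traj n \<pi> \<omega> k) \<and> snd (grid_traj n \<pi> \<omega> k) \<le> n \<and>
         fst (grid_traj n \<pi> \<omega> k) + snd (grid_traj n \<pi> \<omega> k) = k + 2"
  using assms(2)
proof (induction k)
  case 0
  then show ?case using assms(1) by simp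
next
  case (Suc k)
  obtain i j where ij: "grid_traj n \<pi> \<omega> k = (i, j)" by (cases "grid_traj n \<pi> \<omega> k")
  from Suc ij have "1 \<le> i" "i \<le> n" "1 \<le> j" "j \<le> n" "i + j = k + 2" by auto
  moreover from this Suc.prems have "i < n \<or> j < n" by linarith
  ultimately show ?case using ij by (auto simp: grid_step_def split: act.splits)
qed

lemma grid_traj_step_in_grid_X:
  assumes "2 \<le> n" "h \<in> {1..horizon n}"
  shows "(grid_traj n \<pi> \<omega> (h - 1), a) \<in> grid_X n \<and>
    fst (grid_traj n \<pi> \<omega> (h - 1)) + snd (grid_traj n \<pi> \<omega> (h - 1)) = h + 1"
proof -
  have "h - 1 \<le> 2 * n - 2" using assms unfolding horizon_def by auto
  from grid_traj_in_grid[OF _ this, of \<pi> \<omega>] assms show ?thesis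
    by (cases "grid_traj n \<pi> \<omega> (h - 1)") (auto simp: grid_X_def)
qed

lemma fst_grid_traj_add:
  "fst (grid_traj n \<pi> \<omega> k) \<le> fst (grid_traj n \<pi> \<omega> (k + d)) \<and>
   fst (grid_traj n \<pi> \<omega> (k + d)) \<le> fst (grid_traj n \<pi> \<omega> k) + d"
proof (induction d)
  case (Suc d)
  have "fst (grid_traj n \<pi> \<omega> (Suc (k + d))) = fst (grid_traj n \<pi> \<omega> (k + d)) \<or>
        fst (grid_traj n \<pi> \<omega> (Suc (k + d))) = Suc (fst (grid_traj n \<pi> \<omega> (k + d)))"
    by (simp add: fst_grid_step)
  then show ?case using Suc by auto
qed simp

lemma grid_traj_const_policy: "grid_traj n (\<lambda>_ _ _. a) \<omega> k = grid_traj n (\<lambda>_ _ _. a) \<omega>' k"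
  by (induction k) simp_all

subsection \<open>Lookahead policies\<close>

lemma lookahead_policy_measurable:
  "\<pi> \<in> lookahead_policies n L \<mu> \<Longrightarrow> \<pi> h s \<in> measurable (rew_seq n \<mu>) (count_space UNIV)"
  unfolding lookahead_policies_def by blast

lemma lookahead_policy_local:
  "\<pi> \<in> lookahead_policies n L \<mu> \<Longrightarrow> \<omega> \<in> space (rew_seq n \<mu>) \<Longrightarrow> \<omega>' \<in> space (rew_seq n \<mu>) \<Longrightarrow>
    (\<forall>t\<in>{h..min (h + L - 1) (horizon n)}. \<omega> t = \<omega>' t) \<Longrightarrow> \<pi> h s \<omega> = \<pi> h s \<omega>'"
  unfolding lookahead_policies_def by blast

lemma const_policy_lookahead: "(\<lambda>_ _ _. a) \<in> lookahead_policies n L \<mu>"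
  unfolding lookahead_policies_def by auto

lemma lookahead_policies_mono:
  assumes "L \<le> L'"
  shows "lookahead_policies n L \<mu> \<subseteq> lookahead_policies n L' \<mu>"
proof
  fix \<pi> assume \<pi>: "\<pi> \<in> lookahead_policies n L \<mu>"
  have "{h..min (h + L - 1) (horizon n)} \<subseteq> {h..min (h + L' - 1) (horizon n)}" for h
    using assms by auto
  with \<pi> show "\<pi> \<in> lookahead_policies n L' \<mu>"
    unfolding lookahead_policies_def by blast
qed

lemma opt_value_mono: "L \<le> L' \<Longrightarrow> opt_value n L \<mu> \<le> opt_value n L' \<mu>"
  unfolding opt_value_def by (rule SUP_subset_mono[OF lookahead_policies_mono]) simp_all

lemma grid_traj_local:
  assumes \<pi>: "\<pi> \<in> lookahead_policies n L \<mu>"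
    and \<omega>: "\<omega> \<in> space (rew_seq n \<mu>)" "\<omega>' \<in> space (rew_seq n \<mu>)"
    and agree: "\<forall>t\<in>{1..horizon n}. t < k + L \<longrightarrow> \<omega> t = \<omega>' t"
  shows "grid_traj n \<pi> \<omega> k = grid_traj n \<pi> \<omega>' k"
  using agree
proof (induction k)
  case (Suc k)
  then have "grid_traj n \<pi> \<omega> k = grid_traj n \<pi> \<omega>' k" by auto
  moreover have "\<pi> (Suc k) s \<omega> = \<pi> (Suc k) s \<omega>'" for s
    using lookahead_policy_local[OF \<pi> \<omega>] Suc.prems by auto
  ultimately show ?case by simp
qed simp

lemma grid_traj_measurable:
  assumes \<pi>: "\<pi> \<in> lookahead_policies n L \<mu>"
  shows "(\<lambda>\<omega>. grid_traj n \<pi> \<omega> k) \<in> measurable (rew_seq n \<mu>) (count_space UNIV)"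
proof (induction k)
  case (Suc k)
  have "(\<lambda>\<omega>. grid_step n s (\<pi> (Suc k) s \<omega>)) \<in> measurable (rew_seq n \<mu>) (count_space UNIV)" for s
    using lookahead_policy_measurable[OF \<pi>] by (rule measurable_compose) simp
  from measurable_compose_countable'[OF this Suc] show ?case by simp
qed simp

subsection \<open>Reward distributions\<close>

lemma reward_distsD:
  assumes "\<mu> \<in> reward_dists n r" "t \<in> {1..horizon n}"
  shows "prob_space (\<mu> t)" "sets (\<mu> t) = sets (rew_space n)"
    "AE f in \<mu> t. \<forall>x\<in>grid_X n. 0 \<le> f x"
    "(s, a) \<in> grid_X n \<Longrightarrow> integrable (\<mu> t) (\<lambda>f. f (s, a))"
    "(s, a) \<in> grid_X n \<Longrightarrow> (\<integral>f. f (s, a) \<partial>\<mu> t) = r t s a"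
  using assms unfolding reward_dists_def by blast+

lemma rew_space_coord_measurable: "p \<in> grid_X n \<Longrightarrow> (\<lambda>f. f p) \<in> borel_measurable (rew_space n)"
  unfolding rew_space_def by (rule measurable_component_singleton)

lemma reward_coord_measurable:
  assumes "\<mu> \<in> reward_dists n r" "t \<in> {1..horizon n}" "p \<in> grid_X n"
  shows "(\<lambda>f. f p) \<in> borel_measurable (\<mu> t)"
  using rew_space_coord_measurable[OF assms(3)] measurable_cong_sets[OF reward_distsD(2)[OF
    assms(1,2)] refl]
  by blast

lemma nn_integral_reward_coord:
  assumes \<mu>: "\<mu> \<in> reward_dists n r" and t: "t \<in> {1..horizon n}" and p: "p \<in> grid_X n"
  shows "(\<integral>\<^sup>+f. ennreal (f p) \<partial>\<mu> t) = ennreal (r t (fst p) (snd p))"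
proof -
  have "AE f in \<mu> t. 0 \<le> f p"
    using reward_distsD(3)[OF \<mu> t] by eventually_elim (use p in auto)
  then show ?thesis
    using reward_distsD(4,5)[OF \<mu> t, of "fst p" "snd p"] p by (simp add: nn_integral_eq_integral)
qed

lemma nn_integral_sum_reward_coords:
  assumes \<mu>: "\<mu> \<in> reward_dists n r" and t: "t \<in> {1..horizon n}" and S: "S \<subseteq> grid_X n"
  shows "(\<integral>\<^sup>+f. (\<Sum>p\<in>S. ennreal (f p)) \<partial>\<mu> t) = (\<Sum>p\<in>S. ennreal (r t (fst p) (snd p)))"
proof -
  have "(\<integral>\<^sup>+f. (\<Sum>p\<in>S. ennreal (f p)) \<partial>\<mu> t) = (\<Sum>p\<in>S. \<integral>\<^sup>+f. ennreal (f p) \<partial>\<mu> t)"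
  proof (rule nn_integral_sum)
    fix p assume "p \<in> S"
    with S have "p \<in> grid_X n" by blast
    then show "(\<lambda>f. ennreal (f p)) \<in> borel_measurable (\<mu> t)"
      by (rule measurable_compose[OF reward_coord_measurable[OF \<mu> t] measurable_ennreal])
  qed
  also have "\<dots> = (\<Sum>p\<in>S. ennreal (r t (fst p) (snd p)))"
    using S nn_integral_reward_coord[OF \<mu> t] by (intro sum.cong) blast+
  finally show ?thesis .
qed

lemma prob_space_rew_seq: "\<mu> \<in> reward_dists n r \<Longrightarrow> prob_space (rew_seq n \<mu>)"
  unfolding rew_seq_def by (rule prob_space_PiM) (rule reward_distsD(1))

lemma rew_seq_coord_measurable:
  assumes "\<mu> \<in> reward_dists n r" "t \<in> {1..horizon n}" "p \<in> grid_X n"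
  shows "(\<lambda>\<omega>. \<omega> t p) \<in> borel_measurable (rew_seq n \<mu>)"
proof -
  have "(\<lambda>\<omega>. \<omega> t) \<in> measurable (rew_seq n \<mu>) (\<mu> t)"
    unfolding rew_seq_def using assms(2) by (rule measurable_component_singleton)
  from measurable_compose[OF this reward_coord_measurable[OF assms]] show ?thesis .
qed

lemma AE_rew_seq_nonneg:
  assumes \<mu>: "\<mu> \<in> reward_dists n r"
  shows "AE \<omega> in rew_seq n \<mu>. \<forall>h\<in>{1..horizon n}. \<forall>x\<in>grid_X n. 0 \<le> \<omega> h x"
proof (rule AE_finite_allI)
  fix h assume h: "h \<in> {1..horizon n}"
  show "AE \<omega> in rew_seq n \<mu>. \<forall>x\<in>grid_X n. 0 \<le> \<omega> h x"
    unfolding rew_seq_def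
    by (rule AE_PiM_component[where P="\<lambda>f. \<forall>x\<in>grid_X n. 0 \<le> f x"])
       (use h in \<open>auto intro: reward_distsD(1)[OF \<mu>] reward_distsD(3)[OF \<mu> h]\<close>)
qed simp

lemma borel_measurable_sum_chosen_rewards:
  assumes \<mu>: "\<mu> \<in> reward_dists n r" and h: "h \<in> {1..horizon n}"
    and c: "c \<in> measurable (rew_seq n \<mu>) (count_space UNIV)"
    and B: "\<And>v. B v \<subseteq> grid_X n"
  shows "(\<lambda>\<omega>. \<Sum>p\<in>B (c \<omega>). ennreal (\<omega> h p)) \<in> borel_measurable (rew_seq n \<mu>)"
proof -
  have "(\<Sum>p\<in>B (c \<omega>). ennreal (\<omega> h p)) =
      (\<Sum>p\<in>grid_X n. if p \<in> B (c \<omega>) then ennreal (\<omega> h p) else 0)" for \<omega>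
    using B[of "c \<omega>"] by (simp add: sum.inter_restrict[symmetric] Int_absorb1)
  moreover have "(\<lambda>\<omega>. if p \<in> B (c \<omega>) then ennreal (\<omega> h p) else 0) \<in> borel_measurable (rew_seq n \<mu>)"
    if p: "p \<in> grid_X n" for p
  proof (rule measurable_If[OF _ measurable_const])
    show "(\<lambda>\<omega>. ennreal (\<omega> h p)) \<in> borel_measurable (rew_seq n \<mu>)"
      by (rule measurable_compose[OF rew_seq_coord_measurable[OF \<mu> h p] measurable_ennreal])
    show "{\<omega> \<in> space (rew_seq n \<mu>). p \<in> B (c \<omega>)} \<in> sets (rew_seq n \<mu>)"
      using measurable_compose[OF c, where g="\<lambda>v. p \<in> B v" and L="count_space UNIV"]
      by (simp add: pred_def)
  qed simp
  ultimately show ?thesis by simp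
qed

text \<open>Fubini over the coordinate h: given the other steps, the cells B (c \<omega>) are fixed,
  and each contributes its mean.\<close>

lemma nn_integral_sum_chosen_rewards:
  assumes \<mu>: "\<mu> \<in> reward_dists n r" and h: "h \<in> {1..horizon n}"
    and c: "c \<in> measurable (rew_seq n \<mu>) (count_space UNIV)"
    and blind: "\<And>\<omega> \<omega>'. \<omega> \<in> space (rew_seq n \<mu>) \<Longrightarrow> \<omega>' \<in> space (rew_seq n \<mu>) \<Longrightarrow>
        (\<forall>t\<in>{1..horizon n} - {h}. \<omega> t = \<omega>' t) \<Longrightarrow> c \<omega> = c \<omega>'"
    and B: "\<And>v. B v \<subseteq> grid_X n"
  shows "(\<integral>\<^sup>+\<omega>. (\<Sum>p\<in>B (c \<omega>). ennreal (\<omega> h p)) \<partial>rew_seq n \<mu>)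
       = (\<integral>\<^sup>+\<omega>. (\<Sum>p\<in>B (c \<omega>). ennreal (r h (fst p) (snd p))) \<partial>rew_seq n \<mu>)"
proof -
  let ?I = "{1..horizon n}"
  define M where "M t = (if t \<in> ?I then \<mu> t else \<mu> h)" for t
  have prob: "prob_space (M t)" for t
    unfolding M_def using reward_distsD(1)[OF \<mu>] h by auto
  interpret P: product_prob_space M UNIV
    unfolding product_prob_space_def product_prob_space_axioms_def product_sigma_finite_def
    using prob by (auto intro: prob_space_imp_sigma_finite)
  have Mh: "M h = \<mu> h" using h by (simp add: M_def)
  have eq: "rew_seq n \<mu> = PiM (insert h (?I - {h})) M"
    unfolding rew_seq_def using h by (intro PiM_cong) (auto simp: M_def)
  define G where "G \<omega> = (\<Sum>p\<in>B (c \<omega>). ennreal (\<omega> h p))" for \<omega> :: rseq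
  define K where "K \<omega> = (\<Sum>p\<in>B (c \<omega>). ennreal (r h (fst p) (snd p)))" for \<omega> :: rseq
  have Km: "K \<in> borel_measurable (rew_seq n \<mu>)"
    unfolding K_def by (rule measurable_compose[OF c]) simp
  obtain y0 where y0: "y0 \<in> space (M h)"
    using prob_space.not_empty[OF prob[of h]] by auto
  have c_upd: "c (x(h := y)) = c (x(h := y0))"
    if x: "x \<in> space (PiM (?I - {h}) M)" and y: "y \<in> space (M h)" for x y
  proof -
    have "x(h := y') \<in> space (rew_seq n \<mu>)" if y': "y' \<in> space (M h)" for y'
    proof -
      have "x(h := y') \<in> Pi\<^sub>E (insert h (?I - {h})) (\<lambda>i. space (M i))"
        by (rule PiE_fun_upd[where T="\<lambda>i. space (M i)", OF y']) (use x in \<open>simp add: space_PiM\<close>)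
      then show ?thesis unfolding eq space_PiM .
    qed
    with x y y0 show ?thesis by (intro blind) auto
  qed
  have "(\<integral>\<^sup>+\<omega>. G \<omega> \<partial>rew_seq n \<mu>) = (\<integral>\<^sup>+ x. (\<integral>\<^sup>+ y. G (x(h := y)) \<partial>M h) \<partial>PiM (?I - {h}) M)"
    using borel_measurable_sum_chosen_rewards[OF \<mu> h c B] unfolding eq G_def
    by (intro P.product_nn_integral_insert) auto
  also have "\<dots> = (\<integral>\<^sup>+ x. (\<integral>\<^sup>+ y. K (x(h := y)) \<partial>M h) \<partial>PiM (?I - {h}) M)"
  proof (rule nn_integral_cong)
    fix x assume x: "x \<in> space (PiM (?I - {h}) M)"
    have "(\<integral>\<^sup>+ y. G (x(h := y)) \<partial>M h) = (\<integral>\<^sup>+ y. (\<Sum>p\<in>B (c (x(h := y0))). ennreal (y p)) \<partial>M h)"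
      by (rule nn_integral_cong) (simp add: G_def c_upd[OF x])
    also have "\<dots> = K (x(h := y0))"
      unfolding Mh K_def by (rule nn_integral_sum_reward_coords[OF \<mu> h B])
    also have "\<dots> = (\<integral>\<^sup>+ y. K (x(h := y0)) \<partial>M h)"
      using prob_space.emeasure_space_1[OF prob[of h]] by simp
    also have "\<dots> = (\<integral>\<^sup>+ y. K (x(h := y)) \<partial>M h)"
      by (rule nn_integral_cong) (simp add: K_def c_upd[OF x])
    finally show "(\<integral>\<^sup>+ y. G (x(h := y)) \<partial>M h) = (\<integral>\<^sup>+ y. K (x(h := y)) \<partial>M h)" .
  qed
  also have "\<dots> = (\<integral>\<^sup>+\<omega>. K \<omega> \<partial>rew_seq n \<mu>)"
    using Km unfolding eq by (intro P.product_nn_integral_insert[symmetric]) auto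
  finally show ?thesis unfolding G_def K_def .
qed

lemma nn_integral_card_chosen_rewards:
  assumes \<mu>: "\<mu> \<in> reward_dists n (\<lambda>_ _ _. 1)" and h: "h \<in> {1..horizon n}"
    and c: "c \<in> measurable (rew_seq n \<mu>) (count_space UNIV)"
    and blind: "\<And>\<omega> \<omega>'. \<omega> \<in> space (rew_seq n \<mu>) \<Longrightarrow> \<omega>' \<in> space (rew_seq n \<mu>) \<Longrightarrow>
        (\<forall>t\<in>{1..horizon n} - {h}. \<omega> t = \<omega>' t) \<Longrightarrow> c \<omega> = c \<omega>'"
    and B: "\<And>v. B v \<subseteq> grid_X n"
  shows "(\<integral>\<^sup>+\<omega>. (\<Sum>p\<in>B (c \<omega>). ennreal (\<omega> h p)) \<partial>rew_seq n \<mu>)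
       = (\<integral>\<^sup>+\<omega>. of_nat (card (B (c \<omega>))) \<partial>rew_seq n \<mu>)"
proof -
  have "(\<integral>\<^sup>+\<omega>. (\<Sum>p\<in>B (c \<omega>). ennreal (\<omega> h p)) \<partial>rew_seq n \<mu>)
      = (\<integral>\<^sup>+\<omega>. (\<Sum>p\<in>B (c \<omega>). ennreal 1) \<partial>rew_seq n \<mu>)"
    by (rule nn_integral_sum_chosen_rewards[OF \<mu> h c blind B])
  then show ?thesis by simp
qed

subsection \<open>Values of Markovian and lookahead policies\<close>

lemma ennreal_sum_le_sum_ennreal: "ennreal (\<Sum>x\<in>A. f x) \<le> (\<Sum>x\<in>A. ennreal (f x))"
proof (induction A rule: infinite_finite_induct)
  case (insert x F)
  have "ennreal (f x + sum f F) \<le> ennreal (max (f x) 0 + max (sum f F) 0)"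
    by (intro ennreal_leI) auto
  also have "\<dots> = ennreal (f x) + ennreal (sum f F)"
    by (subst ennreal_plus) (auto simp: max.commute)
  also have "\<dots> \<le> ennreal (f x) + (\<Sum>x\<in>F. ennreal (f x))"
    using insert by (intro add_mono) auto
  finally show ?case using insert by simp
qed auto

lemma policy_value_le_cover:
  assumes \<mu>: "\<mu> \<in> reward_dists n (\<lambda>_ _ _. 1)"
    and c: "\<And>h. h \<in> {1..horizon n} \<Longrightarrow> c h \<in> measurable (rew_seq n \<mu>) (count_space UNIV)"
    and blind: "\<And>h \<omega> \<omega>'. h \<in> {1..horizon n} \<Longrightarrow> \<omega> \<in> space (rew_seq n \<mu>) \<Longrightarrow>
        \<omega>' \<in> space (rew_seq n \<mu>) \<Longrightarrow> (\<forall>t\<in>{1..horizon n} - {h}. \<omega> t = \<omega>' t) \<Longrightarrow> c h \<omega> = c h \<omega>'"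
    and B: "\<And>h v. B h v \<subseteq> grid_X n"
    and card_B: "\<And>h v. card (B h v) \<le> K"
    and played: "\<And>h \<omega>. h \<in> {1..horizon n} \<Longrightarrow> \<omega> \<in> space (rew_seq n \<mu>) \<Longrightarrow>
        (grid_traj n \<pi> \<omega> (h - 1), \<pi> h (grid_traj n \<pi> \<omega> (h - 1)) \<omega>) \<in> B h (c h \<omega>)"
  shows "policy_value n \<mu> \<pi> \<le> of_nat (K * horizon n)"
proof -
  let ?I = "{1..horizon n}"
  interpret P: prob_space "rew_seq n \<mu>" by (rule prob_space_rew_seq[OF \<mu>])
  have "policy_value n \<mu> \<pi> \<le> (\<integral>\<^sup>+\<omega>. (\<Sum>h\<in>?I. \<Sum>p\<in>B h (c h \<omega>). ennreal (\<omega> h p)) \<partial>rew_seq n \<mu>)"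
    unfolding policy_value_def
  proof (rule nn_integral_mono)
    fix \<omega> assume \<omega>: "\<omega> \<in> space (rew_seq n \<mu>)"
    have "ennreal (\<Sum>h\<in>?I. \<omega> h (grid_traj n \<pi> \<omega> (h - 1), \<pi> h (grid_traj n \<pi> \<omega> (h - 1)) \<omega>))
        \<le> (\<Sum>h\<in>?I. ennreal (\<omega> h (grid_traj n \<pi> \<omega> (h - 1), \<pi> h (grid_traj n \<pi> \<omega> (h - 1)) \<omega>)))"
      by (rule ennreal_sum_le_sum_ennreal)
    also have "\<dots> \<le> (\<Sum>h\<in>?I. \<Sum>p\<in>B h (c h \<omega>). ennreal (\<omega> h p))"
    proof (rule sum_mono)
      fix h assume h: "h \<in> ?I"
      show "ennreal (\<omega> h (grid_traj n \<pi> \<omega> (h - 1), \<pi> h (grid_traj n \<pi> \<omega> (h - 1)) \<omega>))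
          \<le> (\<Sum>p\<in>B h (c h \<omega>). ennreal (\<omega> h p))"
        by (rule member_le_sum[OF played[OF h \<omega>] _ finite_subset[OF B finite_grid_X]]) simp
    qed
    finally show "ennreal (\<Sum>h\<in>?I. \<omega> h (grid_traj n \<pi> \<omega> (h - 1), \<pi> h (grid_traj n \<pi> \<omega> (h - 1)) \<omega>))
        \<le> (\<Sum>h\<in>?I. \<Sum>p\<in>B h (c h \<omega>). ennreal (\<omega> h p))" .
  qed
  also have "\<dots> = (\<Sum>h\<in>?I. \<integral>\<^sup>+\<omega>. (\<Sum>p\<in>B h (c h \<omega>). ennreal (\<omega> h p)) \<partial>rew_seq n \<mu>)"
  proof (rule nn_integral_sum)
    fix h assume h: "h \<in> ?I"
    show "(\<lambda>\<omega>. \<Sum>p\<in>B h (c h \<omega>). ennreal (\<omega> h p)) \<in> borel_measurable (rew_seq n \<mu>)"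
      by (rule borel_measurable_sum_chosen_rewards[where B="B h", OF \<mu> h c[OF h] B])
  qed
  also have "\<dots> = (\<Sum>h\<in>?I. \<integral>\<^sup>+\<omega>. of_nat (card (B h (c h \<omega>))) \<partial>rew_seq n \<mu>)"
  proof (rule sum.cong[OF refl])
    fix h assume h: "h \<in> ?I"
    show "(\<integral>\<^sup>+\<omega>. (\<Sum>p\<in>B h (c h \<omega>). ennreal (\<omega> h p)) \<partial>rew_seq n \<mu>)
        = (\<integral>\<^sup>+\<omega>. of_nat (card (B h (c h \<omega>))) \<partial>rew_seq n \<mu>)"
      by (rule nn_integral_card_chosen_rewards[where B="B h", OF \<mu> h c[OF h] blind[OF h] B])
  qed
  also have "\<dots> \<le> (\<Sum>h\<in>?I. \<integral>\<^sup>+\<omega>. of_nat K \<partial>rew_seq n \<mu>)"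
    by (intro sum_mono nn_integral_mono) (simp add: card_B)
  also have "\<dots> = of_nat (K * horizon n)"
    by (simp add: P.emeasure_space_1 mult.commute)
  finally show ?thesis .
qed

lemma policy_value_markov_le:
  assumes n: "2 \<le> n" and \<mu>: "\<mu> \<in> reward_dists n (\<lambda>_ _ _. 1)"
    and \<pi>: "\<pi> \<in> lookahead_policies n 0 \<mu>"
  shows "policy_value n \<mu> \<pi> \<le> of_nat (horizon n)"
proof -
  interpret P: prob_space "rew_seq n \<mu>" by (rule prob_space_rew_seq[OF \<mu>])
  obtain \<omega>0 where \<omega>0: "\<omega>0 \<in> space (rew_seq n \<mu>)" using P.not_empty by auto
  have "policy_value n \<mu> \<pi> \<le> of_nat (1 * horizon n)"
  proof (rule policy_value_le_cover[OF \<mu>, where c="\<lambda>h \<omega>. grid_traj n \<pi> \<omega> (h - 1)"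
        and B="\<lambda>h v. {(v, \<pi> h v \<omega>0)} \<inter> grid_X n"])
    show "(\<lambda>\<omega>. grid_traj n \<pi> \<omega> (h - 1)) \<in> measurable (rew_seq n \<mu>) (count_space UNIV)" for h
      by (rule grid_traj_measurable[OF \<pi>])
    show "grid_traj n \<pi> \<omega> (h - 1) = grid_traj n \<pi> \<omega>' (h - 1)"
      if "h \<in> {1..horizon n}" "\<omega> \<in> space (rew_seq n \<mu>)" "\<omega>' \<in> space (rew_seq n \<mu>)"
        "\<forall>t\<in>{1..horizon n} - {h}. \<omega> t = \<omega>' t" for h \<omega> \<omega>'
      using that by (intro grid_traj_local[OF \<pi>]) auto
    show "card ({(v, \<pi> h v \<omega>0)} \<inter> grid_X n) \<le> 1" for h v
      by (simp add: card_le_Suc0_iff_eq)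
    show "(grid_traj n \<pi> \<omega> (h - 1), \<pi> h (grid_traj n \<pi> \<omega> (h - 1)) \<omega>)
        \<in> {(grid_traj n \<pi> \<omega> (h - 1), \<pi> h (grid_traj n \<pi> \<omega> (h - 1)) \<omega>0)} \<inter> grid_X n"
      if h: "h \<in> {1..horizon n}" and \<omega>: "\<omega> \<in> space (rew_seq n \<mu>)" for h \<omega>
    proof -
      have "\<pi> h (grid_traj n \<pi> \<omega> (h - 1)) \<omega> = \<pi> h (grid_traj n \<pi> \<omega> (h - 1)) \<omega>0"
        using h by (intro lookahead_policy_local[OF \<pi> \<omega> \<omega>0]) auto
      then show ?thesis using grid_traj_step_in_grid_X[OF n h] by auto
    qed
  qed auto
  then show ?thesis by simp
qed

lemma policy_value_always_right:
  assumes n: "2 \<le> n" and \<mu>: "\<mu> \<in> reward_dists n (\<lambda>_ _ _. 1)"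
  shows "policy_value n \<mu> (\<lambda>_ _ _. Right) = of_nat (horizon n)"
proof -
  let ?I = "{1..horizon n}"
  interpret P: prob_space "rew_seq n \<mu>" by (rule prob_space_rew_seq[OF \<mu>])
  define p where "p h = (grid_traj n (\<lambda>_ _ _. Right) (\<lambda>_. undefined) (h - 1), Right)" for h
  have p: "p h \<in> grid_X n" if "h \<in> ?I" for h
    unfolding p_def by (rule conjunct1[OF grid_traj_step_in_grid_X[OF n that]])
  have "policy_value n \<mu> (\<lambda>_ _ _. Right) = (\<integral>\<^sup>+\<omega>. ennreal (\<Sum>h\<in>?I. \<omega> h (p h)) \<partial>rew_seq n \<mu>)"
    unfolding policy_value_def p_def
  proof (rule nn_integral_cong)
    fix \<omega> :: rseq
    have "grid_traj n (\<lambda>_ _ _. Right) \<omega> = grid_traj n (\<lambda>_ _ _. Right) (\<lambda>_. undefined)"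
      using grid_traj_const_policy by blast
    then show "ennreal (\<Sum>h\<in>?I. \<omega> h (grid_traj n (\<lambda>_ _ _. Right) \<omega> (h - 1), Right))
        = ennreal (\<Sum>h\<in>?I. \<omega> h (grid_traj n (\<lambda>_ _ _. Right) (\<lambda>_. undefined) (h - 1), Right))"
      by simp
  qed
  also have "\<dots> = (\<integral>\<^sup>+\<omega>. (\<Sum>h\<in>?I. ennreal (\<omega> h (p h))) \<partial>rew_seq n \<mu>)"
  proof (rule nn_integral_cong_AE)
    show "AE \<omega> in rew_seq n \<mu>. ennreal (\<Sum>h\<in>?I. \<omega> h (p h)) = (\<Sum>h\<in>?I. ennreal (\<omega> h (p h)))"
      using AE_rew_seq_nonneg[OF \<mu>] by eventually_elim (subst sum_ennreal, auto simp: p)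
  qed
  also have "\<dots> = (\<Sum>h\<in>?I. \<integral>\<^sup>+\<omega>. ennreal (\<omega> h (p h)) \<partial>rew_seq n \<mu>)"
    using p by (intro nn_integral_sum)
      (auto intro!: measurable_compose[OF rew_seq_coord_measurable[OF \<mu>] measurable_ennreal])
  also have "\<dots> = (\<Sum>h\<in>?I. 1)"
  proof (rule sum.cong[OF refl])
    fix h assume h: "h \<in> ?I"
    have "(\<integral>\<^sup>+\<omega>. (\<Sum>q\<in>{p h}. ennreal (\<omega> h q)) \<partial>rew_seq n \<mu>)
        = (\<integral>\<^sup>+\<omega>. of_nat (card {p h}) \<partial>rew_seq n \<mu>)"
      using p[OF h] by (intro nn_integral_card_chosen_rewards[OF \<mu> h, where c="\<lambda>_. ()" and B="\<lambda>_.
          {p h}"]) auto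
    then show "(\<integral>\<^sup>+\<omega>. ennreal (\<omega> h (p h)) \<partial>rew_seq n \<mu>) = 1"
      by (simp add: P.emeasure_space_1)
  qed
  finally show ?thesis by simp
qed

lemma opt_value_markov:
  assumes n: "2 \<le> n" and \<mu>: "\<mu> \<in> reward_dists n (\<lambda>_ _ _. 1)"
  shows "opt_value n 0 \<mu> = of_nat (horizon n)"
proof (rule antisym)
  show "opt_value n 0 \<mu> \<le> of_nat (horizon n)"
    unfolding opt_value_def using policy_value_markov_le[OF n \<mu>] by (rule SUP_least)
  have "policy_value n \<mu> (\<lambda>_ _ _. Right) \<le> opt_value n 0 \<mu>"
    unfolding opt_value_def by (rule SUP_upper[OF const_policy_lookahead])
  then show "of_nat (horizon n) \<le> opt_value n 0 \<mu>"
    by (simp add: policy_value_always_right[OF n \<mu>])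
qed

lemma policy_value_lookahead_le:
  assumes n: "2 \<le> n" and \<mu>: "\<mu> \<in> reward_dists n (\<lambda>_ _ _. 1)" and L: "1 \<le> L"
    and \<pi>: "\<pi> \<in> lookahead_policies n L \<mu>"
  shows "policy_value n \<mu> \<pi> \<le> of_nat (2 * L * horizon n)"
proof -
  define B where "B h v = {p \<in> grid_X n. fst (fst p) \<in> {fst v..fst v + (L - 1)} \<and> fst (fst p) +
      snd (fst p) = h + 1}"
    for h and v :: "nat \<times> nat"
  show ?thesis
  proof (rule policy_value_le_cover[OF \<mu>, where c="\<lambda>h \<omega>. grid_traj n \<pi> \<omega> (h - L)" and B=B])
    show "(\<lambda>\<omega>. grid_traj n \<pi> \<omega> (h - L)) \<in> measurable (rew_seq n \<mu>) (count_space UNIV)" for h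
      by (rule grid_traj_measurable[OF \<pi>])
    show "grid_traj n \<pi> \<omega> (h - L) = grid_traj n \<pi> \<omega>' (h - L)"
      if "h \<in> {1..horizon n}" "\<omega> \<in> space (rew_seq n \<mu>)" "\<omega>' \<in> space (rew_seq n \<mu>)"
        "\<forall>t\<in>{1..horizon n} - {h}. \<omega> t = \<omega>' t" for h \<omega> \<omega>'
    proof (cases "h \<le> L")
      case False
      with that show ?thesis by (intro grid_traj_local[OF \<pi>]) auto
    qed simp
    show "B h v \<subseteq> grid_X n" for h v unfolding B_def by auto
    show "card (B h v) \<le> 2 * L" for h v
    proof -
      let ?f = "\<lambda>(i, a). ((i, h + 1 - i), a)"
      let ?S = "{fst v..fst v + (L - 1)} \<times> (UNIV :: act set)"
      have "B h v \<subseteq> ?f ` ?S"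
        unfolding B_def by (auto simp: image_iff)
      then have "card (B h v) \<le> card (?f ` ?S)"
        by (rule card_mono[rotated]) (simp add: UNIV_act)
      also have "\<dots> \<le> card ?S"
        by (rule card_image_le) (simp add: UNIV_act)
      also have "\<dots> = 2 * L"
        using L by (simp add: card_cartesian_product UNIV_act)
      finally show ?thesis .
    qed
    show "(grid_traj n \<pi> \<omega> (h - 1), \<pi> h (grid_traj n \<pi> \<omega> (h - 1)) \<omega>) \<in> B h (grid_traj n
        \<pi> \<omega> (h - L))"
      if h: "h \<in> {1..horizon n}" for h \<omega>
    proof -
      have "h - 1 = (h - L) + (h - 1 - (h - L))" using h L by auto
      then have "fst (grid_traj n \<pi> \<omega> (h - L)) \<le> fst (grid_traj n \<pi> \<omega> (h - 1)) \<and>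
          fst (grid_traj n \<pi> \<omega> (h - 1)) \<le> fst (grid_traj n \<pi> \<omega> (h - L)) + (h - 1 - (h - L))"
        using fst_grid_traj_add[of n \<pi> \<omega> "h - L" "h - 1 - (h - L)"] by metis
      moreover have "h - 1 - (h - L) \<le> L - 1" by auto
      ultimately show ?thesis using grid_traj_step_in_grid_X[OF n h] unfolding B_def by auto
    qed
  qed
qed

lemma opt_value_lookahead_le:
  "2 \<le> n \<Longrightarrow> \<mu> \<in> reward_dists n (\<lambda>_ _ _. 1) \<Longrightarrow> 1 \<le> L \<Longrightarrow> opt_value n L \<mu> \<le> of_nat (2 * L * horizon n)"
  unfolding opt_value_def using policy_value_lookahead_le by (auto intro!: SUP_least)

lemma opt_value_lookahead_real:
  assumes n: "2 \<le> n" and \<mu>: "\<mu> \<in> reward_dists n (\<lambda>_ _ _. 1)" and L: "1 \<le> L"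
  obtains v where "opt_value n L \<mu> = ennreal v" "real (horizon n) \<le> v" "v \<le> real (2 * L
      * horizon n)"
    "cr_div (opt_value n 0 \<mu>) (opt_value n L \<mu>) = ennreal (real (horizon n) / v)"
proof -
  have le: "opt_value n L \<mu> \<le> ennreal (real (2 * L * horizon n))"
    using opt_value_lookahead_le[OF n \<mu> L] by (simp add: ennreal_of_nat_eq_real_of_nat)
  have ge: "ennreal (real (horizon n)) \<le> opt_value n L \<mu>"
    using opt_value_mono[of 0 L n \<mu>] opt_value_markov[OF n \<mu>] by (simp add:
      ennreal_of_nat_eq_real_of_nat)
  obtain v where v: "opt_value n L \<mu> = ennreal v" "0 \<le> v"
    using le by (cases "opt_value n L \<mu>") (auto simp: top_unique)
  have H: "0 < real (horizon n)" using n by (simp add: horizon_def)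
  show thesis
  proof (rule that[OF v(1)])
    show "real (horizon n) \<le> v" using ge v by (simp add: ennreal_le_iff)
    then show "cr_div (opt_value n 0 \<mu>) (opt_value n L \<mu>) = ennreal (real (horizon n) / v)"
      using H v by (simp add: cr_div_def opt_value_markov[OF n \<mu>] ennreal_of_nat_eq_real_of_nat
        divide_ennreal)
    show "v \<le> real (2 * L * horizon n)" using le v by (simp add: ennreal_le_iff)
  qed
qed

lemma grid_CR_lower_bound:
  assumes n: "2 \<le> n" and L: "1 \<le> L"
  shows "ennreal (1 / (2 * real L)) \<le> grid_CR n L (\<lambda>_ _ _. 1)"
  unfolding grid_CR_def
proof (rule INF_greatest)
  fix \<mu> assume \<mu>: "\<mu> \<in> reward_dists n (\<lambda>_ _ _. 1)"
  obtain v where "opt_value n L \<mu> = ennreal v"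
    and v: "real (horizon n) \<le> v" "v \<le> real (2 * L * horizon n)"
    and cr: "cr_div (opt_value n 0 \<mu>) (opt_value n L \<mu>) = ennreal (real (horizon n) / v)"
    by (rule opt_value_lookahead_real[OF n \<mu> L])
  have H: "1 \<le> horizon n" using n by (simp add: horizon_def)
  have "1 / (2 * real L) = real (horizon n) / real (2 * L * horizon n)"
    using H L by (simp add: field_simps)
  also have "\<dots> \<le> real (horizon n) / v"
    using H v by (intro divide_left_mono) auto
  finally show "ennreal (1 / (2 * real L)) \<le> cr_div (opt_value n 0 \<mu>) (opt_value n L \<mu>)"
    unfolding cr by (rule ennreal_leI)
qed

lemma grid_CR_le:
  assumes n: "2 \<le> n" and L: "1 \<le> L" and \<mu>: "\<mu> \<in> reward_dists n (\<lambda>_ _ _. 1)"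
    and x: "0 < x" "ennreal x \<le> opt_value n L \<mu>"
  shows "grid_CR n L (\<lambda>_ _ _. 1) \<le> ennreal (real (horizon n) / x)"
proof -
  obtain v where v: "opt_value n L \<mu> = ennreal v" "real (horizon n) \<le> v"
    and "v \<le> real (2 * L * horizon n)"
    and cr: "cr_div (opt_value n 0 \<mu>) (opt_value n L \<mu>) = ennreal (real (horizon n) / v)"
    by (rule opt_value_lookahead_real[OF n \<mu> L])
  have "x \<le> v" using x v by (simp add: ennreal_le_iff)
  have "grid_CR n L (\<lambda>_ _ _. 1) \<le> cr_div (opt_value n 0 \<mu>) (opt_value n L \<mu>)"
    unfolding grid_CR_def by (rule INF_lower[OF \<mu>])
  also have "\<dots> = ennreal (real (horizon n) / v)" by (rule cr)
  also have "\<dots> \<le> ennreal (real (horizon n) / x)"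
    using \<open>x \<le> v\<close> x(1) by (intro ennreal_leI divide_left_mono) auto
  finally show ?thesis .
qed

subsection \<open>The hard instance\<close>

text \<open>Block b of width w consists of the steps 4wb + 1, ..., 4wb + 4w. The trajectory of the
  policy below enters it at the diagonal state (c, c), c = 1 + 2wb, and stays in the square
  [c, c + 2w]^2. The steps at offsets d \<in> [w, 2w) of a block are lotteries on the w cells of
  their antidiagonal in the columns [c, c + w).\<close>

definition num_blocks :: "nat \<Rightarrow> nat \<Rightarrow> nat" where
  "num_blocks n w = (n - 1) div (2 * w)"

definition block_of :: "nat \<Rightarrow> nat \<Rightarrow> nat" where
  "block_of w h = (h - 1) div (4 * w)"

definition offset_in_block :: "nat \<Rightarrow> nat \<Rightarrow> nat" where
  "offset_in_block w h = (h - 1) mod (4 * w)"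

definition block_step :: "nat \<Rightarrow> nat \<Rightarrow> nat \<Rightarrow> nat" where
  "block_step w b d = 4 * w * b + d + 1"

definition block_corner :: "nat \<Rightarrow> nat \<Rightarrow> nat" where
  "block_corner w h = 1 + 2 * w * block_of w h"

definition lottery_step :: "nat \<Rightarrow> nat \<Rightarrow> nat \<Rightarrow> bool" where
  "lottery_step n w h \<longleftrightarrow> 1 \<le> h \<and> block_of w h < num_blocks n w \<and>
     w \<le> offset_in_block w h \<and> offset_in_block w h < 2 * w"

definition lottery_cell :: "nat \<Rightarrow> nat \<Rightarrow> nat \<Rightarrow> (nat \<times> nat) \<times> act" where
  "lottery_cell w h e = ((block_corner w h + e, h + 1 - (block_corner w h + e)), Right)"

definition in_lottery :: "nat \<Rightarrow> nat \<Rightarrow> nat \<Rightarrow> (nat \<times> nat) \<times> act \<Rightarrow> bool" where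
  "in_lottery n w h p \<longleftrightarrow> lottery_step n w h \<and>
     fst (fst p) \<in> {block_corner w h..<block_corner w h + w} \<and> fst (fst p) + snd (fst p) = h + 1"

definition tickets :: "nat \<Rightarrow> (nat \<times> nat) set" where
  "tickets w = {1..w} \<times> {1..w}"

text \<open>A uniform ticket u wins iff fst u = 1, i.e. with probability 1/w; it then pays w^2 on both
  actions of the lottery cell in column block_corner w h + snd u - 1. So every cell has mean 1.\<close>

definition lottery_reward :: "nat \<Rightarrow> nat \<Rightarrow> nat \<Rightarrow> nat \<times> nat \<Rightarrow> ((nat \<times> nat) \<times> act) \<Rightarrow> real" where
  "lottery_reward n w h u = restrict (\<lambda>p. if in_lottery n w h p
     then (if fst u = 1 \<and> fst (fst p) = block_corner w h + snd u - 1 then real (w * w) else 0)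
     else 1) (grid_X n)"

definition hard_instance :: "nat \<Rightarrow> nat \<Rightarrow> nat \<Rightarrow> (((nat \<times> nat) \<times> act) \<Rightarrow> real) measure" where
  "hard_instance n w h =
    distr (measure_pmf (pmf_of_set (tickets w))) (rew_space n) (lottery_reward n w h)"

definition upcoming_lotteries :: "nat \<Rightarrow> nat \<Rightarrow> (nat \<times> nat) set" where
  "upcoming_lotteries w h = {(d, e). offset_in_block w h < d \<and> w \<le> d \<and> d < 2 * w \<and> e < w}"

definition seen_jackpots :: "nat \<Rightarrow> nat \<Rightarrow> rseq \<Rightarrow> nat \<times> nat \<Rightarrow> bool" where
  "seen_jackpots w h \<omega> de \<longleftrightarrow> de \<in> upcoming_lotteries w h \<and>
     0 < \<omega> (block_step w (block_of w h) (fst de))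
       (lottery_cell w (block_step w (block_of w h) (fst de)) (snd de))"

text \<open>The column of the first jackpot (earliest step, then leftmost cell); without a jackpot, the
  far side of the block.\<close>

definition target_column :: "nat \<Rightarrow> nat \<Rightarrow> (nat \<times> nat \<Rightarrow> bool) \<Rightarrow> nat" where
  "target_column w h v =
    (if \<exists>d e. v (d, e) then block_corner w h + (LEAST e. v (LEAST d. \<exists>e. v (d, e), e))
     else block_corner w h + 2 * w)"

definition jackpot_policy :: "nat \<Rightarrow> nat \<Rightarrow> policy" where
  "jackpot_policy n w h s \<omega> = (if h = 0 \<or> \<not> block_of w h < num_blocks n w then Right
      else if fst s < target_column w h (seen_jackpots w h \<omega>) then Right else Up)"

lemma measurable_finite_pred_family:
  assumes "finite S" "\<And>i. i \<in> S \<Longrightarrow> Measurable.pred M (g i)"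
  shows "(\<lambda>\<omega>. F (\<lambda>i. i \<in> S \<and> g i \<omega>)) \<in> measurable M (count_space UNIV)"
  using assms
proof (induction S arbitrary: F rule: finite_induct)
  case empty then show ?case by simp
next
  case (insert x S)
  have m1: "(\<lambda>\<omega>. (\<lambda>v. F (v(x := True))) (\<lambda>i. i \<in> S \<and> g i \<omega>)) \<in> measurable M (count_space UNIV)"
    using insert.IH[of "\<lambda>v. F (v(x := True))"] insert.prems by auto
  have m2: "(\<lambda>\<omega>. F (\<lambda>i. i \<in> S \<and> g i \<omega>)) \<in> measurable M (count_space UNIV)"
    using insert.IH[of F] insert.prems by auto
  have px: "{\<omega> \<in> space M. g x \<omega>} \<in> sets M" using insert.prems[of x] unfolding pred_def by simp
  have eq: "(\<lambda>\<omega>. F (\<lambda>i. i \<in> insert x S \<and> g i \<omega>)) =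
     (\<lambda>\<omega>. if g x \<omega> then (\<lambda>v. F (v(x := True))) (\<lambda>i. i \<in> S \<and> g i \<omega>) else F (\<lambda>i. i \<in> S \<and> g i \<omega>))"
  proof (rule ext)
    fix \<omega>
    show "F (\<lambda>i. i \<in> insert x S \<and> g i \<omega>) =
      (if g x \<omega> then (\<lambda>v. F (v(x := True))) (\<lambda>i. i \<in> S \<and> g i \<omega>) else F (\<lambda>i. i \<in> S \<and> g i \<omega>))"
      using insert.hyps(2) by (cases "g x \<omega>") (auto intro!: arg_cong[where f=F] simp: fun_eq_iff)
  qed
  show ?case unfolding eq by (rule measurable_If[OF m1 m2 px])
qed

lemma finite_tickets[simp]: "finite (tickets w)" by (simp add: tickets_def)

lemma tickets_nonempty: "1 \<le> w \<Longrightarrow> tickets w \<noteq> {}" by (auto simp: tickets_def)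

lemma card_tickets: "card (tickets w) = w * w" by (simp add: tickets_def card_cartesian_product)

lemma space_rew_space: "space (rew_space n) = (\<Pi>\<^sub>E p\<in>grid_X n. UNIV)"
  by (simp add: rew_space_def space_PiM)

lemma lottery_reward_in_space: "lottery_reward n w h u \<in> space (rew_space n)"
  by (simp add: space_rew_space lottery_reward_def)

lemma lottery_reward_measurable: "lottery_reward n w h \<in> measurable (measure_pmf (pmf_of_set
    (tickets w))) (rew_space n)"
  using lottery_reward_in_space by simp

lemma prob_space_hard_instance: "prob_space (hard_instance n w h)"
  unfolding hard_instance_def by (rule prob_space.prob_space_distr[OF prob_space_measure_pmf
    lottery_reward_measurable])

lemma sets_rew_space_nonneg: "{f \<in> space (rew_space n). \<forall>x\<in>grid_X n. 0 \<le> f x} \<in> sets (rew_space n)"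
proof -
  have "Measurable.pred (rew_space n) (\<lambda>f. \<forall>x\<in>grid_X n. 0 \<le> f x)"
  proof (rule pred_intros_finite(3)[OF finite_grid_X])
    fix x assume x: "x \<in> grid_X n"
    show "Measurable.pred (rew_space n) (\<lambda>f. 0 \<le> f x)"
      using pred_sets2[OF _ rew_space_coord_measurable[OF x], of "{0..}"] by simp
  qed
  then show ?thesis unfolding pred_def .
qed

lemma pred_rew_space_le: "p \<in> grid_X n \<Longrightarrow> Measurable.pred (rew_space n) (\<lambda>f. f p \<le> c)"
  using pred_sets2[OF _ rew_space_coord_measurable, of "{..c}"] by simp

lemma pred_rew_space_eq: "p \<in> grid_X n \<Longrightarrow> Measurable.pred (rew_space n) (\<lambda>f. f p = c)"
  using pred_sets2[OF _ rew_space_coord_measurable, of "{c}"] by simp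

lemma block_decomp:
  assumes w: "1 \<le> w" and h: "1 \<le> h"
  shows "h = 4 * w * block_of w h + offset_in_block w h + 1" "offset_in_block w h < 4 * w"
  using w h unfolding block_of_def offset_in_block_def
  by (metis Suc_eq_plus1 le_add_diff_inverse2 mult_div_mod_eq add.commute, simp)

lemma num_blocks_le: "1 \<le> w \<Longrightarrow> b < num_blocks n w \<Longrightarrow> 2 * w * (b + 1) \<le> n - 1"
proof -
  assume w: "1 \<le> w" and b: "b < num_blocks n w"
  then have "Suc b \<le> (n - 1) div (2 * w)" by (simp add: num_blocks_def)
  then have "Suc b * (2 * w) \<le> (n - 1) div (2 * w) * (2 * w)" by (rule mult_right_mono) simp
  also have "\<dots> \<le> n - 1" by (rule div_times_less_eq_dividend)
  finally show ?thesis by (simp add: algebra_simps)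
qed

lemma block_of_block_step: "d < 4 * w \<Longrightarrow> block_of w (block_step w b d) = b"
  unfolding block_of_def block_step_def by simp

lemma offset_in_block_block_step: "d < 4 * w \<Longrightarrow> offset_in_block w (block_step w b d) = d"
  unfolding offset_in_block_def block_step_def by simp

lemma block_corner_block_step: "d < 4 * w \<Longrightarrow> block_corner w (block_step w b d) = 1 + 2 * w * b"
  unfolding block_corner_def by (simp add: block_of_block_step)

lemma inj_on_block_step: "inj_on (\<lambda>(b, d). block_step w b d) ({..<B} \<times> {..<4 * w})"
proof (rule inj_onI, clarsimp)
  fix b d b' d' assume "b < B" "d < 4 * w" "b' < B" "d' < 4 * w" and e: "block_step w b d =
      block_step w b' d'"
  then have "(4 * w * b + d) div (4 * w) = (4 * w * b' + d') div (4 * w)"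
    "(4 * w * b + d) mod (4 * w) = (4 * w * b' + d') mod (4 * w)" by (simp_all add: block_step_def)
  then show "b = b' \<and> d = d'" using \<open>d < 4 * w\<close> \<open>d' < 4 * w\<close> by simp
qed

lemma inj_block_step: "inj (block_step w b)"
  by (rule inj_onI) (simp add: block_step_def)

lemma finite_upcoming_lotteries: "finite (upcoming_lotteries w h)"
proof -
  have "upcoming_lotteries w h \<subseteq> {..<2 * w} \<times> {..<w}" by (auto simp: upcoming_lotteries_def)
  then show ?thesis by (rule finite_subset) simp
qed

lemma target_column_cases: "target_column w h v = block_corner w h + 2 * w \<or> (\<exists>d e. v (d, e) \<and>
    target_column w h v = block_corner w h + e)"
proof (cases "\<exists>d e. v (d, e)")
  case True
  define d0 where "d0 = (LEAST d. \<exists>e. v (d, e))"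
  have "\<exists>e. v (d0, e)" unfolding d0_def using True by (rule LeastI_ex)
  then have "v (d0, LEAST e. v (d0, e))" by (rule LeastI_ex)
  then show ?thesis using True by (auto simp: target_column_def d0_def)
qed (simp add: target_column_def)

lemma target_column_eq:
  assumes "v (d1, e1)" "\<And>d e. v (d, e) \<Longrightarrow> d1 \<le> d" "\<And>e. v (d1, e) \<Longrightarrow> e = e1"
  shows "target_column w h v = block_corner w h + e1"
proof -
  have "(LEAST d. \<exists>e. v (d, e)) = d1"
  proof (rule Least_equality)
    show "\<exists>e. v (d1, e)" using assms(1) by (rule exI)
    show "d1 \<le> y" if "\<exists>e. v (y, e)" for y using that assms(2) by (elim exE)
  qed
  moreover have "(LEAST e. v (d1, e)) = e1"
  proof (rule Least_equality)
    show "v (d1, e1)" by (rule assms(1))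
    show "e1 \<le> y" if "v (d1, y)" for y using assms(3)[OF that] by simp
  qed
  ultimately show ?thesis using assms(1) by (auto simp: target_column_def)
qed

lemma double_sum_lessThan: "2 * (\<Sum>i<w. real i) = real w * (real w - 1)"
  by (induction w) (auto simp: algebra_simps)

lemma sum_geometric_ge:
  assumes w: "1 \<le> w"
  shows "real w * real w / 2 \<le> (\<Sum>d\<in>{w..<2 * w}. real w * (real (w - 1) / real w) ^ (d - w))"
proof -
  let ?q = "real (w - 1) / real w"
  have q: "?q = 1 + (- 1 / real w)" using w by (simp add: field_simps of_nat_diff)
  have "(\<Sum>d\<in>{w..<2 * w}. real w * ?q ^ (d - w)) = (\<Sum>i\<in>{0..<w}. real w * ?q ^ i)"
  proof -
    have "{w..<2 * w} = {0 + w..<w + w}" by (simp add: mult_2)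
    then show ?thesis by (simp only: sum.shift_bounds_nat_ivl) simp
  qed
  also have "\<dots> \<ge> (\<Sum>i\<in>{0..<w}. real w * (1 - real i / real w))"
  proof (rule sum_mono)
    fix i assume "i \<in> {0..<w}"
    have "1 + real i * (- 1 / real w) \<le> ?q ^ i"
      unfolding q by (rule Bernoulli_inequality) (use w in \<open>simp add: field_simps\<close>)
    then show "real w * (1 - real i / real w) \<le> real w * ?q ^ i" by (intro mult_left_mono) auto
  qed
  also have "(\<Sum>i\<in>{0..<w}. real w * (1 - real i / real w)) = real w * real w - (\<Sum>i<w. real i)"
  proof -
    have "\<And>i. real w * (1 - real i / real w) = real w - real i" using w by (simp add: field_simps)
    then have "(\<Sum>i\<in>{0..<w}. real w * (1 - real i / real w)) = (\<Sum>i\<in>{0..<w}. real w - real i)" by simp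
    also have "\<dots> = real w * real w - (\<Sum>i<w. real i)" by (simp add: sum_subtractf atLeast0LessThan)
    finally show ?thesis .
  qed
  also have "\<dots> = real w * real w / 2 + real w / 2" using double_sum_lessThan[of w] by (simp add:
    field_simps)
  finally show ?thesis by simp
qed

definition no_jackpot :: "nat \<Rightarrow> nat \<Rightarrow> nat \<Rightarrow> (((nat \<times> nat) \<times> act) \<Rightarrow> real) set" where
  "no_jackpot n w t = {f \<in> space (rew_space n). \<forall>e\<in>{..<w}. f (lottery_cell w t e) \<le> 0}"

definition jackpot :: "nat \<Rightarrow> nat \<Rightarrow> nat \<Rightarrow> nat \<Rightarrow> (((nat \<times> nat) \<times> act) \<Rightarrow> real) set" where
  "jackpot n w t e1 = {f \<in> space (rew_space n). f (lottery_cell w t e1) = real (w * w) \<and>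
      f (fst (lottery_cell w t e1), Up) = real (w * w) \<and> (\<forall>e\<in>{..<w}. e \<noteq> e1 \<longrightarrow> f (lottery_cell
        w t e) \<le> 0)}"

definition first_jackpot :: "nat \<Rightarrow> nat \<Rightarrow> nat \<Rightarrow> nat \<Rightarrow> nat \<Rightarrow> rseq set" where
  "first_jackpot n w b d1 e1 = Pi\<^sub>E {1..horizon n} (\<lambda>t. if t \<in> block_step w b ` {w..<d1} then
      no_jackpot n w t
      else if t = block_step w b d1 then jackpot n w t e1 else space (hard_instance n w t))"

context
  fixes n w :: nat
  assumes n: "2 \<le> n" and w: "1 \<le> w"
begin

lemma sum_lottery_reward:
  assumes p: "p \<in> grid_X n"
  shows "(\<Sum>u\<in>tickets w. lottery_reward n w h u p) = real (w * w)"
proof (cases "in_lottery n w h p")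
  case True
  define i where "i = fst (fst p)"
  have i: "block_corner w h \<le> i" "i < block_corner w h + w" using True by (auto simp:
    in_lottery_def i_def)
  have "(\<Sum>u\<in>tickets w. lottery_reward n w h u p) = (\<Sum>u\<in>tickets w. if u = (1, i + 1 - block_corner
      w h) then real (w * w) else 0)"
  proof (rule sum.cong[OF refl])
    fix u assume u: "u \<in> tickets w"
    then have "1 \<le> snd u" by (auto simp: tickets_def)
    then have "(fst u = 1 \<and> i = block_corner w h + snd u - 1) = (u = (1, i + 1 - block_corner w h))"
      using i by (cases u) auto
    then show "lottery_reward n w h u p = (if u = (1, i + 1 - block_corner w h) then real (w
        * w) else 0)"
      using True p by (simp add: lottery_reward_def i_def)
  qed
  also have "\<dots> = real (w * w)"
    using i by (simp add: tickets_def) (use i in presburger)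
  finally show ?thesis .
next
  case False
  then show ?thesis using p by (simp add: lottery_reward_def card_tickets)
qed

lemma hard_instance_reward_dists: "hard_instance n w \<in> reward_dists n (\<lambda>_ _ _. 1)"
  unfolding reward_dists_def
proof (intro CollectI ballI conjI allI impI)
  fix h assume h: "h \<in> {1..horizon n}"
  show "prob_space (hard_instance n w h)" by (rule prob_space_hard_instance)
  show "sets (hard_instance n w h) = sets (rew_space n)" by (simp add: hard_instance_def)
  show "AE f in hard_instance n w h. \<forall>x\<in>grid_X n. 0 \<le> f x"
    unfolding hard_instance_def
    by (subst AE_distr_iff[OF lottery_reward_measurable sets_rew_space_nonneg])
       (auto simp: AE_measure_pmf_iff lottery_reward_def)
  fix s a assume sa: "(s, a) \<in> grid_X n"
  have m: "(\<lambda>f. f (s, a)) \<in> borel_measurable (rew_space n)" by (rule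
    rew_space_coord_measurable[OF sa])
  show "integrable (hard_instance n w h) (\<lambda>f. f (s, a))"
    unfolding hard_instance_def
    by (subst integrable_distr_eq[OF lottery_reward_measurable m]) (simp add:
      integrable_measure_pmf_finite tickets_nonempty[OF w])
  show "(\<integral>f. f (s, a) \<partial>hard_instance n w h) = 1"
    unfolding hard_instance_def
    using integral_distr[OF lottery_reward_measurable m] sum_lottery_reward[OF sa] w
    by (simp add: integral_pmf_of_set tickets_nonempty card_tickets)
qed

lemma emeasure_hard_instance:
  assumes A: "A \<in> sets (rew_space n)"
  shows "emeasure (hard_instance n w t) A = ennreal (real (card (tickets w \<inter> {u. lottery_reward n
      w t u \<in> A})) / real (w * w))"
proof -
  have "emeasure (hard_instance n w t) A = emeasure (measure_pmf (pmf_of_set (tickets w)))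
      (lottery_reward n w t -` A \<inter> space (measure_pmf (pmf_of_set (tickets w))))"
    unfolding hard_instance_def by (rule emeasure_distr[OF lottery_reward_measurable A])
  also have "\<dots> = ennreal (real (card (tickets w \<inter> {u. lottery_reward n w t u \<in> A})) / real (w * w))"
    using tickets_nonempty[OF w] by (simp add: emeasure_pmf_of_set card_tickets vimage_def)
  finally show ?thesis .
qed

lemma lottery_block_step:
  assumes b: "b < num_blocks n w" and dw: "w \<le> d" and d: "d < 2 * w" and e: "e < w"
  shows "block_step w b d \<in> {1..horizon n}" "lottery_cell w (block_step w b d) e \<in> grid_X n"
    "(fst (lottery_cell w (block_step w b d) e), Up) \<in> grid_X n"
    "lottery_step n w (block_step w b d)" "block_corner w (block_step w b d) = 1 + 2 * w * b"
proof -
  have B: "2 * w * (b + 1) \<le> n - 1" by (rule num_blocks_le[OF w b])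
  have d4: "d < 4 * w" using d by simp
  show k: "block_corner w (block_step w b d) = 1 + 2 * w * b" by (rule
    block_corner_block_step[OF d4])
  show "block_step w b d \<in> {1..horizon n}" using B d n unfolding block_step_def horizon_def by
    (auto simp: algebra_simps)
  show "lottery_cell w (block_step w b d) e \<in> grid_X n"
    using B d dw e n k unfolding lottery_cell_def grid_X_def block_step_def by (auto simp:
      algebra_simps)
  then show "(fst (lottery_cell w (block_step w b d) e), Up) \<in> grid_X n" by (simp add: grid_X_def
    lottery_cell_def)
  show "lottery_step n w (block_step w b d)"
    using b dw d
    by (simp add: lottery_step_def block_of_block_step[OF d4] offset_in_block_block_step[OF d4])
      (simp add: block_step_def)
qed

lemma upcoming_lottery_facts:
  assumes h: "1 \<le> h" and b: "block_of w h < num_blocks n w"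
    and de: "(d, e) \<in> upcoming_lotteries w h"
  shows "block_step w (block_of w h) d \<in> {1..horizon n}" "lottery_cell w (block_step w (block_of w
      h) d) e \<in> grid_X n"
    "h < block_step w (block_of w h) d" "block_step w (block_of w h) d \<le> h + 2 * w - 1"
proof -
  have d: "offset_in_block w h < d" "w \<le> d" "d < 2 * w" "e < w" using de by (auto simp:
    upcoming_lotteries_def)
  have hh: "h = 4 * w * block_of w h + offset_in_block w h + 1" using block_decomp[OF w h] by simp
  have B: "2 * w * (block_of w h + 1) \<le> n - 1" by (rule num_blocks_le[OF w b])
  have k: "block_corner w (block_step w (block_of w h) d) = 1 + 2 * w * block_of w h" using
    block_corner_block_step[of d w "block_of w h"] d by simp
  show "block_step w (block_of w h) d \<in> {1..horizon n}" using B d n unfolding block_step_def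
    horizon_def by (auto simp: algebra_simps)
  show "lottery_cell w (block_step w (block_of w h) d) e \<in> grid_X n"
    using B d n k unfolding lottery_cell_def grid_X_def block_step_def by (auto simp: algebra_simps)
  show "h < block_step w (block_of w h) d" using hh d unfolding block_step_def by linarith
  show "block_step w (block_of w h) d \<le> h + 2 * w - 1" using hh d unfolding
    block_step_def by linarith
qed

lemma jackpot_policy_measurable:
  "jackpot_policy n w h s \<in> measurable (rew_seq n (hard_instance n w)) (count_space UNIV)"
proof (cases "h = 0 \<or> \<not> block_of w h < num_blocks n w")
  case True
  then show ?thesis unfolding jackpot_policy_def by (simp add: measurable_const)
next
  case False
  then have h: "1 \<le> h" and b: "block_of w h < num_blocks n w" by auto
  define hit where "hit de \<omega> \<longleftrightarrow>
    0 < \<omega> (block_step w (block_of w h) (fst de)) (lottery_cell w (block_step w (block_of w h) (fst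
      de)) (snd de))"
    for de and \<omega> :: rseq
  have eq: "jackpot_policy n w h s = (\<lambda>\<omega>. (\<lambda>v. if fst s < target_column w h v then Right else Up)
      (\<lambda>de. de \<in> upcoming_lotteries w h \<and> hit de \<omega>))"
  proof -
    have seen: "seen_jackpots w h \<omega> = (\<lambda>de. de \<in> upcoming_lotteries w h \<and> hit de \<omega>)" for \<omega>
      by (simp add: fun_eq_iff seen_jackpots_def hit_def)
    show ?thesis unfolding jackpot_policy_def seen using False by (simp add: fun_eq_iff)
  qed
  show ?thesis unfolding eq
  proof (rule measurable_finite_pred_family[OF finite_upcoming_lotteries])
    fix de assume de: "de \<in> upcoming_lotteries w h"
    obtain d e where de': "de = (d, e)" by (cases de)
    have t: "block_step w (block_of w h) d \<in> {1..horizon n}" and q: "lottery_cell w (block_step w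
        (block_of w h) d) e \<in> grid_X n"
      using upcoming_lottery_facts[OF h b de[unfolded de']] by auto
    show "Measurable.pred (rew_seq n (hard_instance n w)) (hit de)"
      unfolding hit_def de' fst_conv snd_conv
      using pred_sets2[OF _ rew_seq_coord_measurable[OF hard_instance_reward_dists t q], of
        "{0<..}"] by simp
  qed
qed

lemma jackpot_policy_lookahead:
  assumes L: "2 * w \<le> L"
  shows "jackpot_policy n w \<in> lookahead_policies n L (hard_instance n w)"
  unfolding lookahead_policies_def
proof (intro CollectI allI conjI ballI impI)
  fix h s
  show "jackpot_policy n w h s \<in> measurable (rew_seq n (hard_instance n w)) (count_space UNIV)" by
    (rule jackpot_policy_measurable)
  fix \<omega> \<omega>' :: rseq
  assume "\<omega> \<in> space (rew_seq n (hard_instance n w))" "\<omega>' \<in> space (rew_seq n (hard_instance n w))"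
    and ag: "\<forall>t\<in>{h..min (h + L - 1) (horizon n)}. \<omega> t = \<omega>' t"
  show "jackpot_policy n w h s \<omega> = jackpot_policy n w h s \<omega>'"
  proof (cases "h = 0 \<or> \<not> block_of w h < num_blocks n w")
    case True then show ?thesis by (simp add: jackpot_policy_def)
  next
    case False
    then have h: "1 \<le> h" and b: "block_of w h < num_blocks n w" by auto
    have "seen_jackpots w h \<omega> = seen_jackpots w h \<omega>'"
    proof (rule ext)
      fix de
      show "seen_jackpots w h \<omega> de = seen_jackpots w h \<omega>' de"
      proof (cases "de \<in> upcoming_lotteries w h")
        case True
        obtain d e where de': "de = (d, e)" by (cases de)
        note f = upcoming_lottery_facts[OF h b True[unfolded de']]
        have "block_step w (block_of w h) d \<in> {h..min (h + L - 1) (horizon n)}" using f L by auto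
        then have "\<omega> (block_step w (block_of w h) d) = \<omega>' (block_step w (block_of w h) d)"
          using ag by blast
        then show ?thesis by (simp add: seen_jackpots_def de')
      qed (simp add: seen_jackpots_def)
    qed
    then show ?thesis by (simp add: jackpot_policy_def)
  qed
qed

lemma jackpot_policy_step:
  assumes h: "1 \<le> h" and b: "block_of w h < num_blocks n w"
    and ij: "block_corner w h \<le> i" "i \<le> block_corner w h + 2 * w" "block_corner w h \<le> j" "j \<le>
        block_corner w h + 2 * w" "i + j = h + 1"
  shows "grid_step n (i, j) (jackpot_policy n w h (i, j) \<omega>) =
          (if i < target_column w h (seen_jackpots w h \<omega>) then (Suc i, j) else (i, Suc j))
    \<and> (i < target_column w h (seen_jackpots w h \<omega>) \<longrightarrow> Suc i \<le> block_corner w h + 2 * w)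
    \<and> (\<not> i < target_column w h (seen_jackpots w h \<omega>) \<longrightarrow> Suc j \<le> block_corner w h + 2 * w)"
proof -
  define x where "x = target_column w h (seen_jackpots w h \<omega>)"
  define z where "z = 2 * w * block_of w h"
  define r where "r = offset_in_block w h"
  have hh: "h = 2 * z + r + 1" using block_decomp[OF w h] by (simp add: z_def r_def)
  have rr: "r < 4 * w" using block_decomp[OF w h] by (simp add: r_def)
  have k: "block_corner w h = 1 + z" by (simp add: block_corner_def z_def)
  have B: "z + 2 * w \<le> n - 1" using num_blocks_le[OF w b] by (simp add: z_def algebra_simps)
  have c1: "i < x \<longrightarrow> Suc i \<le> block_corner w h + 2 * w"
    using target_column_cases[of w h "seen_jackpots w h \<omega>"] unfolding x_def[symmetric]
    by (auto simp: seen_jackpots_def upcoming_lotteries_def)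
  have c2: "\<not> i < x \<longrightarrow> Suc j \<le> block_corner w h + 2 * w"
  proof
    assume nx: "\<not> i < x"
    from target_column_cases[of w h "seen_jackpots w h \<omega>"] show "Suc j \<le> block_corner w h + 2 * w"
    proof
      assume "target_column w h (seen_jackpots w h \<omega>) = block_corner w h + 2 * w"
      then show ?thesis using nx ij hh rr k unfolding x_def by linarith
    next
      assume "\<exists>d e. seen_jackpots w h \<omega> (d, e) \<and> target_column w h (seen_jackpots w h \<omega>) =
          block_corner w h + e"
      then obtain d e where "(d, e) \<in> upcoming_lotteries w h" "x = block_corner w h + e" by (auto
        simp: seen_jackpots_def x_def)
      then have "r < d" "d < 2 * w" by (auto simp: upcoming_lotteries_def r_def)
      then show ?thesis using nx ij hh k \<open>x = block_corner w h + e\<close> by linarith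
    qed
  qed
  have pi: "jackpot_policy n w h (i, j) \<omega> = (if i < x then Right else Up)"
    using h b by (simp add: jackpot_policy_def x_def)
  have "grid_step n (i, j) (jackpot_policy n w h (i, j) \<omega>) = (if i < x then (Suc i, j) else
      (i, Suc j))"
  proof (cases "i < x")
    case True
    then have "i < n" using c1 B k n by linarith
    then show ?thesis using True pi ij B k by (auto simp: grid_step_def)
  next
    case False
    then have "j < n" using c2 B k n by linarith
    then show ?thesis using False pi ij B k by (auto simp: grid_step_def)
  qed
  then show ?thesis using c1 c2 by (simp add: x_def)
qed

abbreviation "jackpot_traj \<omega> \<equiv> grid_traj n (jackpot_policy n w) \<omega>"

lemma jackpot_traj_in_block:
  assumes b: "b < num_blocks n w"
    and c: "jackpot_traj \<omega> (4 * w * b) = (1 + 2 * w * b, 1 + 2 * w * b)"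
  shows "r \<le> 4 * w \<Longrightarrow> 1 + 2 * w * b \<le> fst (jackpot_traj \<omega> (4 * w * b + r)) \<and>
     fst (jackpot_traj \<omega> (4 * w * b + r)) \<le> 1 + 2 * w * b + 2 * w \<and>
     1 + 2 * w * b \<le> snd (jackpot_traj \<omega> (4 * w * b + r)) \<and>
     snd (jackpot_traj \<omega> (4 * w * b + r)) \<le> 1 + 2 * w * b + 2 * w \<and>
     fst (jackpot_traj \<omega> (4 * w * b + r)) + snd (jackpot_traj \<omega> (4 * w * b + r)) = 4 * w
       * b + r + 2"
proof (induction r)
  case 0 then show ?case using c by simp
next
  case (Suc r)
  then have r: "r < 4 * w" by simp
  obtain i j where ij: "jackpot_traj \<omega> (4 * w * b + r) = (i, j)" by (cases "jackpot_traj \<omega> (4 *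
      w * b + r)")
  have IH: "1 + 2 * w * b \<le> i" "i \<le> 1 + 2 * w * b + 2 * w" "1 + 2 * w * b \<le> j" "j \<le> 1 + 2 * w
      * b + 2 * w"
     "i + j = 4 * w * b + r + 2" using Suc ij by auto
  have hb: "block_of w (4 * w * b + r + 1) < num_blocks n w" using block_of_block_step[OF r,
    unfolded block_step_def] b by simp
  note sd = jackpot_policy_step[OF _ hb, of i j \<omega>, unfolded block_corner_block_step[OF r, unfolded
    block_step_def]]
  have "jackpot_traj \<omega> (4 * w * b + Suc r) = grid_step n (i, j) (jackpot_policy n w (4 * w * b + r
      + 1) (i, j) \<omega>)"
    using ij by simp
  then show ?case using sd IH by (auto split: if_splits)
qed

lemma jackpot_traj_corner:
  "b \<le> num_blocks n w \<Longrightarrow> jackpot_traj \<omega> (4 * w * b) = (1 + 2 * w * b, 1 + 2 * w * b)"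
proof (induction b)
  case 0 then show ?case by simp
next
  case (Suc b)
  then have b: "b < num_blocks n w" by simp
  note bw = jackpot_traj_in_block[OF b Suc.IH[OF less_imp_le[OF b]], of "4 * w", OF order.refl]
  have e: "4 * w * b + 4 * w = 4 * w * Suc b" by simp
  show ?case using bw unfolding e by (cases "jackpot_traj \<omega> (4 * w * Suc b)") (auto simp:
    algebra_simps)
qed

lemma target_column_first_jackpot:
  assumes b: "b < num_blocks n w" and r: "r < d1" and d1: "w \<le> d1" "d1 < 2 * w" and e1: "e1 < w"
    and before: "\<And>d e. d \<in> {w..<d1} \<Longrightarrow> e < w \<Longrightarrow> \<omega> (block_step w b d) (lottery_cell w (block_step w
        b d) e) \<le> 0"
    and hit: "0 < \<omega> (block_step w b d1) (lottery_cell w (block_step w b d1) e1)"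
    and miss: "\<And>e. e < w \<Longrightarrow> e \<noteq> e1 \<Longrightarrow> \<omega> (block_step w b d1) (lottery_cell w (block_step w
        b d1) e) \<le> 0"
  shows "target_column w (block_step w b r) (seen_jackpots w (block_step w b r) \<omega>) = 1 + 2
      * w * b + e1"
proof -
  let ?h = "block_step w b r"
  have r4: "r < 4 * w" using r d1 by simp
  have seen: "seen_jackpots w ?h \<omega> (d, e) \<longleftrightarrow> r < d \<and> w \<le> d \<and> d < 2 * w \<and> e < w \<and>
      0 < \<omega> (block_step w b d) (lottery_cell w (block_step w b d) e)" for d e
    by (simp add: seen_jackpots_def upcoming_lotteries_def block_of_block_step[OF r4]
        offset_in_block_block_step[OF r4])
  have "target_column w ?h (seen_jackpots w ?h \<omega>) = block_corner w ?h + e1"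
  proof (rule target_column_eq)
    show "seen_jackpots w ?h \<omega> (d1, e1)" using r d1 e1 hit by (simp add: seen)
    show "d1 \<le> d" if "seen_jackpots w ?h \<omega> (d, e)" for d e
    proof (rule ccontr)
      assume "\<not> d1 \<le> d"
      with that before[of d e] show False by (auto simp: seen)
    qed
    show "e = e1" if "seen_jackpots w ?h \<omega> (d1, e)" for e
    proof (rule ccontr)
      assume "e \<noteq> e1"
      with that miss[of e] show False by (auto simp: seen)
    qed
  qed
  then show ?thesis by (simp add: block_corner_block_step[OF r4])
qed

text \<open>Until the step of the first jackpot, the policy moves right up to the jackpot column and then
  up, so it stands on the winning cell exactly when the lottery is drawn.\<close>

lemma jackpot_traj_first_jackpot:
  assumes b: "b < num_blocks n w" and d1: "w \<le> d1" "d1 < 2 * w" and e1: "e1 < w"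
    and before: "\<And>d e. d \<in> {w..<d1} \<Longrightarrow> e < w \<Longrightarrow> \<omega> (block_step w b d) (lottery_cell w (block_step w
        b d) e) \<le> 0"
    and hit: "0 < \<omega> (block_step w b d1) (lottery_cell w (block_step w b d1) e1)"
    and miss: "\<And>e. e < w \<Longrightarrow> e \<noteq> e1 \<Longrightarrow> \<omega> (block_step w b d1) (lottery_cell w (block_step w
        b d1) e) \<le> 0"
  shows "jackpot_traj \<omega> (block_step w b d1 - 1) = fst (lottery_cell w (block_step w b d1) e1)"
proof -
  define k where "k = 1 + 2 * w * b"
  have walk: "r \<le> d1 \<Longrightarrow> jackpot_traj \<omega> (4 * w * b + r) = (k + min r e1, k + r - min r e1)" for r
  proof (induction r)
    case 0
    then show ?case using jackpot_traj_corner[of b \<omega>] b by (simp add: k_def)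
  next
    case (Suc r)
    then have r: "r < d1" by simp
    have r4: "r < 4 * w" using r d1 by simp
    let ?h = "block_step w b r"
    have hb: "block_of w ?h < num_blocks n w" using b by (simp add: block_of_block_step[OF r4])
    have kh: "block_corner w ?h = k" by (simp add: block_corner_block_step[OF r4] k_def)
    have target: "target_column w ?h (seen_jackpots w ?h \<omega>) = k + e1"
      using target_column_first_jackpot[where \<omega>=\<omega>, OF b r d1 e1 before hit miss] by
        (simp add: k_def)
    have "jackpot_traj \<omega> (4 * w * b + Suc r)
        = grid_step n (k + min r e1, k + r - min r e1) (jackpot_policy n w ?h (k + min r e1, k + r
          - min r e1) \<omega>)"
      using Suc r by (simp add: block_step_def)
    also have "\<dots> = (if k + min r e1 < k + e1 then (Suc (k + min r e1), k + r - min r e1)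
        else (k + min r e1, Suc (k + r - min r e1)))"
      using jackpot_policy_step[OF _ hb, of "k + min r e1" "k + r - min r e1" \<omega>] kh target r d1 e1
      by (simp add: block_step_def k_def algebra_simps)
    finally show ?case by auto
  qed
  have "jackpot_traj \<omega> (block_step w b d1 - 1) = (k + e1, k + d1 - e1)"
    using walk[of d1] d1 e1 by (simp add: block_step_def)
  moreover have "block_corner w (block_step w b d1) = k"
    using block_corner_block_step[of d1 w b] d1 by (simp add: k_def)
  ultimately show ?thesis using d1 e1 by (simp add: lottery_cell_def k_def block_step_def
    algebra_simps)
qed

lemma lottery_reward_lottery_cell:
  assumes b: "b < num_blocks n w" and d: "w \<le> d" "d < 2 * w" and e: "e < w"
    and u: "u \<in> tickets w" and a: "a = Right \<or> a = Up"
  shows "lottery_reward n w (block_step w b d) u (fst (lottery_cell w (block_step w b d) e), a) =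
      (if u = (1, e + 1) then real (w * w) else 0)"
proof -
  note f = lottery_block_step[OF b d e]
  have mem: "(fst (lottery_cell w (block_step w b d) e), a) \<in> grid_X n" using f(2,3) a by (auto
    simp: lottery_cell_def)
  have in_lottery: "in_lottery n w (block_step w b d) (fst (lottery_cell w (block_step w
      b d) e), a)"
    using f(4) f(5) e d unfolding in_lottery_def lottery_cell_def by (auto simp: block_step_def)
  have "1 \<le> snd u" using u by (auto simp: tickets_def)
  then have "(fst u = 1 \<and> block_corner w (block_step w b d) + e = block_corner w (block_step w b
      d) + snd u - 1) = (u = (1, e + 1))"
    by (cases u) auto
  then show ?thesis using mem in_lottery by (simp add: lottery_reward_def lottery_cell_def)
qed

lemma sets_no_jackpot:
  assumes b: "b < num_blocks n w" and dw: "w \<le> d" and d: "d < 2 * w"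
  shows "no_jackpot n w (block_step w b d) \<in> sets (rew_space n)"
proof -
  have "Measurable.pred (rew_space n) (\<lambda>f. \<forall>e\<in>{..<w}. f (lottery_cell w (block_step w b d) e) \<le> 0)"
    by (rule pred_intros_finite(3)) (auto intro!: pred_rew_space_le lottery_block_step[OF b dw d])
  then show ?thesis unfolding no_jackpot_def pred_def .
qed

lemma sets_jackpot:
  assumes b: "b < num_blocks n w" and dw: "w \<le> d" and d: "d < 2 * w" and e1: "e1 < w"
  shows "jackpot n w (block_step w b d) e1 \<in> sets (rew_space n)"
proof -
  let ?t = "block_step w b d"
  have p1: "Measurable.pred (rew_space n) (\<lambda>f. f (lottery_cell w ?t e1) = real (w * w))"
    by (rule pred_rew_space_eq) (rule lottery_block_step[OF b dw d e1])
  have p2: "Measurable.pred (rew_space n) (\<lambda>f. f (fst (lottery_cell w ?t e1), Up) = real (w * w))"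
    by (rule pred_rew_space_eq) (rule lottery_block_step[OF b dw d e1])
  have p3: "Measurable.pred (rew_space n) (\<lambda>f. \<forall>e\<in>{..<w}. e \<noteq> e1 \<longrightarrow> f (lottery_cell w ?t e) \<le> 0)"
  proof (rule pred_intros_finite(3))
    fix e assume "e \<in> {..<w}"
    then have "lottery_cell w ?t e \<in> grid_X n" using lottery_block_step[OF b dw d] by auto
    then show "Measurable.pred (rew_space n) (\<lambda>f. e \<noteq> e1 \<longrightarrow> f (lottery_cell w ?t e) \<le> 0)"
      by (cases "e = e1") (auto intro: pred_rew_space_le)
  qed simp
  have "Measurable.pred (rew_space n) (\<lambda>f. f (lottery_cell w ?t e1) = real (w * w) \<and>
      f (fst (lottery_cell w ?t e1), Up) = real (w * w) \<and> (\<forall>e\<in>{..<w}. e \<noteq> e1 \<longrightarrow> f (lottery_cell w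
        ?t e) \<le> 0))"
    using p1 p2 p3 by measurable
  then show ?thesis unfolding jackpot_def pred_def .
qed

lemma emeasure_no_jackpot:
  assumes b: "b < num_blocks n w" and d: "w \<le> d" "d < 2 * w"
  shows "emeasure (hard_instance n w (block_step w b d)) (no_jackpot n w (block_step w b d)) =
      ennreal (real (w - 1) / real w)"
proof -
  have "tickets w \<inter> {u. lottery_reward n w (block_step w b d) u \<in> no_jackpot n w (block_step w b
      d)} = {2..w} \<times> {1..w}"
  proof (intro set_eqI iffI)
    fix u assume u: "u \<in> tickets w \<inter> {u. lottery_reward n w (block_step w b d) u \<in> no_jackpot n w
        (block_step w b d)}"
    then have uU: "u \<in> tickets w" by simp
    show "u \<in> {2..w} \<times> {1..w}"
    proof (rule ccontr)
      assume "u \<notin> {2..w} \<times> {1..w}"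
      then have "fst u = 1" using uU by (auto simp: tickets_def)
      then have e: "u = (1, (snd u - 1) + 1)" "snd u - 1 < w" using uU by (cases u; auto simp:
        tickets_def)+
      have "lottery_reward n w (block_step w b d) u (lottery_cell w (block_step w b d) (snd u -
          1)) = real (w * w)"
        using lottery_reward_lottery_cell[OF b d e(2) uU, of Right] e(1) by (simp add:
          lottery_cell_def)
      moreover have "lottery_reward n w (block_step w b d) u (lottery_cell w (block_step w b d)
          (snd u - 1)) \<le> 0"
        using u e(2) by (auto simp: no_jackpot_def)
      moreover have "0 < real (w * w)" using w by simp
      ultimately show False by linarith
    qed
  next
    fix u assume u: "u \<in> {2..w} \<times> {1..w}"
    then have uU: "u \<in> tickets w" by (auto simp: tickets_def)
    have "lottery_reward n w (block_step w b d) u (lottery_cell w (block_step w b d) e) \<le> 0" if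
      "e < w" for e
      using lottery_reward_lottery_cell[OF b d that uU, of Right] u by (auto simp: lottery_cell_def)
    then show "u \<in> tickets w \<inter> {u. lottery_reward n w (block_step w b d) u \<in> no_jackpot n w
        (block_step w b d)}"
      using uU by (simp add: no_jackpot_def lottery_reward_in_space)
  qed
  moreover have "card ({2..w} \<times> {1..w}) = (w - 1) * w" by (simp add: card_cartesian_product)
  ultimately show ?thesis
    using emeasure_hard_instance[OF sets_no_jackpot[OF b d]] w by (simp add: field_simps)
qed

lemma emeasure_jackpot:
  assumes b: "b < num_blocks n w" and d: "w \<le> d" "d < 2 * w" and e1: "e1 < w"
  shows "emeasure (hard_instance n w (block_step w b d)) (jackpot n w (block_step w b d) e1) =
      ennreal (1 / real (w * w))"
proof -
  have "tickets w \<inter> {u. lottery_reward n w (block_step w b d) u \<in> jackpot n w (block_step w b d)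
      e1} = {(1, e1 + 1)}"
  proof (intro set_eqI iffI)
    fix u assume u: "u \<in> tickets w \<inter> {u. lottery_reward n w (block_step w b d) u \<in> jackpot n w
        (block_step w b d) e1}"
    then have uU: "u \<in> tickets w" by simp
    have "lottery_reward n w (block_step w b d) u (lottery_cell w (block_step w b d) e1) = real (w
        * w)" using u by (simp add: jackpot_def)
    then show "u \<in> {(1, e1 + 1)}" using lottery_reward_lottery_cell[OF b d e1 uU, of Right] w
      by (simp add: lottery_cell_def split: if_splits)
  next
    fix u :: "nat \<times> nat" assume u: "u \<in> {(1, e1 + 1)}"
    then have uU: "u \<in> tickets w" using e1 by (auto simp: tickets_def)
    have a: "lottery_reward n w (block_step w b d) u (lottery_cell w (block_step w b d) e1) =
        real (w * w)"
      using lottery_reward_lottery_cell[OF b d e1 uU, of Right] u by (simp add: lottery_cell_def)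
    have c: "lottery_reward n w (block_step w b d) u (fst (lottery_cell w (block_step w b d) e1),
        Up) = real (w * w)"
      using lottery_reward_lottery_cell[OF b d e1 uU, of Up] u by simp
    have z: "lottery_reward n w (block_step w b d) u (lottery_cell w (block_step w b d) e) \<le> 0" if
      "e < w" "e \<noteq> e1" for e
      using lottery_reward_lottery_cell[OF b d that(1) uU, of Right] u that by (auto simp:
        lottery_cell_def)
    show "u \<in> tickets w \<inter> {u. lottery_reward n w (block_step w b d) u \<in> jackpot n w
        (block_step w b d) e1}"
      using uU a c z by (simp add: jackpot_def lottery_reward_in_space)
  qed
  then show ?thesis
    using emeasure_hard_instance[OF sets_jackpot[OF b d e1]] by simp
qed

lemma emeasure_first_jackpot:
  assumes b: "b < num_blocks n w" and d1: "w \<le> d1" "d1 < 2 * w" and e1: "e1 < w"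
  shows "emeasure (rew_seq n (hard_instance n w)) (first_jackpot n w b d1 e1) =
    ennreal ((real (w - 1) / real w) ^ (d1 - w) / real (w * w))"
proof -
  let ?I = "{1..horizon n}"
  let ?Z = "block_step w b ` {w..<d1}"
  let ?t1 = "block_step w b d1"
  let ?q = "real (w - 1) / real w"
  interpret P: product_sigma_finite "hard_instance n w"
    by (rule product_sigma_finite.intro) (rule prob_space_imp_sigma_finite[OF
      prob_space_hard_instance])
  define A where "A t = (if t \<in> ?Z then no_jackpot n w t else if t = ?t1 then jackpot n w t e1
      else space (hard_instance n w t))" for t
  define g where "g t = (if t \<in> ?Z then ?q else if t = ?t1 then 1 / real (w * w) else 1)" for t
  have Zsub: "?Z \<subseteq> ?I" using lottery_block_step(1)[OF b _ _ e1] d1 by auto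
  have t1I: "?t1 \<in> ?I" using lottery_block_step(1)[OF b d1 e1] .
  have t1Z: "?t1 \<notin> ?Z" using inj_onD[OF inj_block_step[of w b]] by fastforce
  have A: "A t \<in> sets (hard_instance n w t)" and eA: "emeasure (hard_instance n w t) (A t) =
      ennreal (g t)" if t: "t \<in> ?I" for t
  proof -
    have s: "sets (hard_instance n w t) = sets (rew_space n)" by (simp add: hard_instance_def)
    have sp: "space (hard_instance n w t) = space (rew_space n)" by (simp add: hard_instance_def)
    show "A t \<in> sets (hard_instance n w t)"
      using d1 e1 sets_no_jackpot[OF b] sets_jackpot[OF b d1 e1] unfolding A_def s sp by (auto
        intro: sets.top)
    show "emeasure (hard_instance n w t) (A t) = ennreal (g t)"
    proof (cases "t \<in> ?Z")
      case True
      then obtain d where d: "d \<in> {w..<d1}" "t = block_step w b d" by auto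
      then show ?thesis using emeasure_no_jackpot[OF b, of d] d1 True by (auto simp: A_def g_def)
    next
      case False
      then show ?thesis
        using emeasure_jackpot[OF b d1 e1] prob_space.emeasure_space_1[OF prob_space_hard_instance]
        by (auto simp: A_def g_def)
    qed
  qed
  have "emeasure (rew_seq n (hard_instance n w)) (first_jackpot n w b d1 e1) = (\<Prod>t\<in>?I. emeasure
      (hard_instance n w t) (A t))"
    unfolding rew_seq_def first_jackpot_def A_def[symmetric] by (rule P.emeasure_PiM)
      (auto intro: A)
  also have "\<dots> = (\<Prod>t\<in>?I. ennreal (g t))" by (rule prod.cong) (auto simp: eA)
  also have "\<dots> = ennreal (prod g ?I)" by (rule prod_ennreal) (simp add: g_def)
  also have "prod g ?I = prod g (insert ?t1 ?Z)"
    by (rule prod.mono_neutral_right) (use Zsub t1I in \<open>auto simp: g_def\<close>)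
  also have "\<dots> = g ?t1 * prod g ?Z" using t1Z by simp
  also have "prod g ?Z = ?q ^ card ?Z" by (simp add: g_def)
  also have "card ?Z = d1 - w" using card_image[OF inj_on_subset[OF inj_block_step[of w b]
    subset_UNIV]] by simp
  finally show ?thesis using t1Z by (simp add: g_def)
qed

lemma sets_first_jackpot:
  assumes b: "b < num_blocks n w" and d1: "w \<le> d1" "d1 < 2 * w" and e1: "e1 < w"
  shows "first_jackpot n w b d1 e1 \<in> sets (rew_seq n (hard_instance n w))"
  unfolding first_jackpot_def rew_seq_def
proof (rule sets_PiM_I_finite)
  fix t assume t: "t \<in> {1..horizon n}"
  have s: "sets (hard_instance n w t) = sets (rew_space n)" by (simp add: hard_instance_def)
  have sp: "space (hard_instance n w t) = space (rew_space n)" by (simp add: hard_instance_def)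
  show "(if t \<in> block_step w b ` {w..<d1} then no_jackpot n w t else if t = block_step w b d1 then
      jackpot n w t e1 else space (hard_instance n w t)) \<in> sets (hard_instance n w t)"
    using d1 e1 sets_no_jackpot[OF b] sets_jackpot[OF b d1 e1] unfolding s sp by (auto
      intro: sets.top)
qed simp

abbreviation "jackpot_reward h \<omega> \<equiv> \<omega> h (jackpot_traj \<omega> (h - 1), jackpot_policy n w h (jackpot_traj
    \<omega> (h - 1)) \<omega>)"

lemma first_jackpotD:
  assumes b: "b < num_blocks n w" and d: "w \<le> d" "d < 2 * w" and e1: "e1 < w"
    and \<omega>: "\<omega> \<in> first_jackpot n w b d e1"
  shows "\<And>d' e. d' \<in> {w..<d} \<Longrightarrow> e < w \<Longrightarrow> \<omega> (block_step w b d') (lottery_cell w (block_step w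
      b d') e) \<le> 0"
    and "\<omega> (block_step w b d) \<in> jackpot n w (block_step w b d) e1"
proof -
  have not_before: "block_step w b d \<notin> block_step w b ` {w..<d}"
    using inj_onD[OF inj_block_step[of w b]] by fastforce
  have mem: "\<omega> t \<in> (if t \<in> block_step w b ` {w..<d} then no_jackpot n w t
      else if t = block_step w b d then jackpot n w t e1 else space (hard_instance n w t))"
    if "t \<in> {1..horizon n}" for t
    using \<omega> that unfolding first_jackpot_def by (auto simp: PiE_iff)
  show "\<omega> (block_step w b d) \<in> jackpot n w (block_step w b d) e1"
    using mem[OF lottery_block_step(1)[OF b d e1]] not_before by simp
  show "\<omega> (block_step w b d') (lottery_cell w (block_step w b d') e) \<le> 0"
    if d': "d' \<in> {w..<d}" and e: "e < w" for d' e
  proof -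
    have "block_step w b d' \<in> {1..horizon n}" using lottery_block_step(1)[OF b _ _ e] d' d by auto
    then have "\<omega> (block_step w b d') \<in> no_jackpot n w (block_step w b d')"
      using mem[of "block_step w b d'"] d' by auto
    then show ?thesis using e by (simp add: no_jackpot_def)
  qed
qed

lemma jackpot_reward_ge_first_jackpot:
  assumes b: "b < num_blocks n w" and d: "w \<le> d" "d < 2 * w"
  shows "(\<Sum>e<w. ennreal (real (w * w)) * indicator (first_jackpot n w b d e) \<omega>)
    \<le> ennreal (jackpot_reward (block_step w b d) \<omega>)"
proof (cases "\<exists>e0<w. \<omega> \<in> first_jackpot n w b d e0")
  case False
  then have "\<forall>e\<in>{..<w}. indicator (first_jackpot n w b d e) \<omega> = (0::ennreal)" by auto
  then show ?thesis by simp
next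
  case True
  then obtain e0 where e0: "e0 < w" "\<omega> \<in> first_jackpot n w b d e0" by auto
  let ?t = "block_step w b d"
  have won: "\<omega> ?t \<in> jackpot n w ?t e0" by (rule first_jackpotD(2)[OF b d e0])
  have unique: "\<omega> \<notin> first_jackpot n w b d e" if "e < w" "e \<noteq> e0" for e
  proof
    assume "\<omega> \<in> first_jackpot n w b d e"
    then have "\<omega> ?t (lottery_cell w ?t e) = real (w * w)"
      using first_jackpotD(2)[OF b d that(1)] by (simp add: jackpot_def)
    moreover have "\<omega> ?t (lottery_cell w ?t e) \<le> 0" using won that by (simp add: jackpot_def)
    moreover have "0 < real (w * w)" using w by simp
    ultimately show False by linarith
  qed
  have "(\<Sum>e<w. ennreal (real (w * w)) * indicator (first_jackpot n w b d e) \<omega>)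
      = (\<Sum>e<w. if e = e0 then ennreal (real (w * w)) else 0)"
    by (rule sum.cong[OF refl]) (use e0 unique in auto)
  also have "\<dots> = ennreal (real (w * w))" using e0 by simp
  also have "\<dots> = ennreal (jackpot_reward ?t \<omega>)"
  proof -
    have "jackpot_traj \<omega> (?t - 1) = fst (lottery_cell w ?t e0)"
      by (rule jackpot_traj_first_jackpot[where \<omega>=\<omega>, OF b d e0(1) first_jackpotD(1)[OF b d e0]])
        (use won w in \<open>simp_all add: jackpot_def\<close>)
    moreover have "\<omega> ?t (fst (lottery_cell w ?t e0), a) = real (w * w)" for a
      using won by (cases a) (auto simp: jackpot_def lottery_cell_def)
    ultimately show ?thesis by simp
  qed
  finally show ?thesis by simp
qed

lemma sum_emeasure_first_jackpot:
  assumes b: "b < num_blocks n w" and d: "d \<in> {w..<2 * w}"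
  shows "(\<Sum>e<w. ennreal (real (w * w)) * emeasure (rew_seq n (hard_instance n w))
      (first_jackpot n w b d e))
    = ennreal (real w * (real (w - 1) / real w) ^ (d - w))"
proof -
  let ?q = "real (w - 1) / real w"
  have d': "w \<le> d" "d < 2 * w" using d by auto
  have "(\<Sum>e<w. ennreal (real (w * w)) * emeasure (rew_seq n (hard_instance n w))
      (first_jackpot n w b d e))
      = (\<Sum>e<w. ennreal (real (w * w)) * ennreal (?q ^ (d - w) / real (w * w)))"
    using emeasure_first_jackpot[OF b d'] by (intro sum.cong refl) auto
  also have "\<dots> = (\<Sum>e<w. ennreal (?q ^ (d - w)))"
    using w by (intro sum.cong refl) (simp add: ennreal_mult[symmetric] del: of_nat_mult)
  also have "\<dots> = ennreal (real w * ?q ^ (d - w))"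
    using w by (simp add: ennreal_mult ennreal_of_nat_eq_real_of_nat of_nat_diff)
  finally show ?thesis .
qed

lemma nn_integral_first_jackpots:
  "(\<integral>\<^sup>+\<omega>. (\<Sum>b<num_blocks n w. \<Sum>d\<in>{w..<2 * w}. \<Sum>e<w.
      ennreal (real (w * w)) * indicator (first_jackpot n w b d e) \<omega>) \<partial>rew_seq n
        (hard_instance n w))
    = ennreal (real (num_blocks n w) * (\<Sum>d\<in>{w..<2 * w}. real w * (real (w - 1) / real w)
      ^ (d - w)))"
  (is "(\<integral>\<^sup>+\<omega>. (\<Sum>b<?B. \<Sum>d\<in>?D. \<Sum>e<w. ?f b d e \<omega>) \<partial>?M) = _")
proof -
  let ?q = "real (w - 1) / real w"
  have f: "?f b d e \<in> borel_measurable ?M" if "b < ?B" "d \<in> ?D" "e < w" for b d e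
  proof -
    have [measurable]: "first_jackpot n w b d e \<in> sets ?M"
      using sets_first_jackpot[OF that(1) _ _ that(3)] that(2) by auto
    show ?thesis by measurable
  qed
  have fe: "(\<lambda>\<omega>. \<Sum>e<w. ?f b d e \<omega>) \<in> borel_measurable ?M" if "b < ?B" "d \<in> ?D" for b d
    by (rule borel_measurable_sum) (rule f[OF that], simp)
  have fde: "(\<lambda>\<omega>. \<Sum>d\<in>?D. \<Sum>e<w. ?f b d e \<omega>) \<in> borel_measurable ?M" if "b < ?B" for b
    by (rule borel_measurable_sum) (rule fe[OF that], assumption)
  have "(\<integral>\<^sup>+\<omega>. (\<Sum>b<?B. \<Sum>d\<in>?D. \<Sum>e<w. ?f b d e \<omega>) \<partial>?M) = (\<Sum>b<?B. \<integral>\<^sup>+\<omega>. (\<Sum>d\<in>?D. \<Sum>e<w. ?f b d e \<omega>) \<partial>?M)"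
    by (rule nn_integral_sum) (rule fde, simp)
  also have "\<dots> = (\<Sum>b<?B. \<Sum>d\<in>?D. \<integral>\<^sup>+\<omega>. (\<Sum>e<w. ?f b d e \<omega>) \<partial>?M)"
  proof (rule sum.cong[OF refl])
    fix b assume "b \<in> {..<?B}"
    then show "(\<integral>\<^sup>+\<omega>. (\<Sum>d\<in>?D. \<Sum>e<w. ?f b d e \<omega>) \<partial>?M) = (\<Sum>d\<in>?D. \<integral>\<^sup>+\<omega>. (\<Sum>e<w. ?f b d e \<omega>) \<partial>?M)"
      by (intro nn_integral_sum fe) simp_all
  qed
  also have "\<dots> = (\<Sum>b<?B. \<Sum>d\<in>?D. \<Sum>e<w. \<integral>\<^sup>+\<omega>. ?f b d e \<omega> \<partial>?M)"
  proof (intro sum.cong refl)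
    fix b d assume "b \<in> {..<?B}" "d \<in> ?D"
    then show "(\<integral>\<^sup>+\<omega>. (\<Sum>e<w. ?f b d e \<omega>) \<partial>?M) = (\<Sum>e<w. \<integral>\<^sup>+\<omega>. ?f b d e \<omega> \<partial>?M)"
      by (intro nn_integral_sum f) simp_all
  qed
  also have "\<dots> = (\<Sum>b<?B. \<Sum>d\<in>?D. \<Sum>e<w. ennreal (real (w * w)) * emeasure ?M (first_jackpot
      n w b d e))"
    using sets_first_jackpot by (intro sum.cong refl nn_integral_cmult_indicator) auto
  also have "\<dots> = (\<Sum>b<?B. \<Sum>d\<in>?D. ennreal (real w * ?q ^ (d - w)))"
    using sum_emeasure_first_jackpot by (intro sum.cong refl) auto
  also have "\<dots> = ennreal (real ?B * (\<Sum>d\<in>?D. real w * ?q ^ (d - w)))"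
  proof -
    have "(\<Sum>d\<in>?D. ennreal (real w * ?q ^ (d - w))) = ennreal (\<Sum>d\<in>?D. real w * ?q ^ (d - w))"
      by (rule sum_ennreal) simp
    moreover have "0 \<le> (\<Sum>d\<in>?D. real w * ?q ^ (d - w))"
      by (rule sum_nonneg) simp
    ultimately show ?thesis by (simp add: ennreal_of_nat_eq_real_of_nat ennreal_mult)
  qed
  finally show ?thesis .
qed

lemma first_jackpots_le_rewards:
  assumes \<omega>: "\<omega> \<in> space (rew_seq n (hard_instance n w))"
    and nonneg: "\<forall>h\<in>{1..horizon n}. \<forall>x\<in>grid_X n. 0 \<le> \<omega> h x"
  shows "(\<Sum>b<num_blocks n w. \<Sum>d\<in>{w..<2 * w}. \<Sum>e<w.
      ennreal (real (w * w)) * indicator (first_jackpot n w b d e) \<omega>) \<le> ennreal (\<Sum>h\<in>{1..horizon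
        n}. jackpot_reward h \<omega>)"
proof -
  let ?B = "num_blocks n w" and ?I = "{1..horizon n}"
  let ?T = "(\<lambda>(b, d). block_step w b d) ` ({..<?B} \<times> {w..<2 * w})"
  have TI: "?T \<subseteq> ?I"
    using lottery_block_step(1)[of _ _ 0] w by auto
  have inj: "inj_on (\<lambda>(b, d). block_step w b d) ({..<?B} \<times> {w..<2 * w})"
    by (rule inj_on_subset[OF inj_on_block_step]) auto
  have "(\<Sum>b<?B. \<Sum>d\<in>{w..<2 * w}. \<Sum>e<w. ennreal (real (w * w)) * indicator (first_jackpot
      n w b d e) \<omega>)
      \<le> (\<Sum>b<?B. \<Sum>d\<in>{w..<2 * w}. ennreal (jackpot_reward (block_step w b d) \<omega>))"
    by (intro sum_mono jackpot_reward_ge_first_jackpot) auto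
  also have "\<dots> = (\<Sum>(b, d)\<in>{..<?B} \<times> {w..<2 * w}. ennreal (jackpot_reward (block_step w b d) \<omega>))"
    by (rule sum.cartesian_product)
  also have "\<dots> = (\<Sum>h\<in>?T. ennreal (jackpot_reward h \<omega>))"
    by (subst sum.reindex[OF inj]) (simp add: case_prod_beta)
  also have "\<dots> \<le> (\<Sum>h\<in>?I. ennreal (jackpot_reward h \<omega>))"
    by (rule sum_mono2[OF _ TI]) auto
  also have "\<dots> = ennreal (\<Sum>h\<in>?I. jackpot_reward h \<omega>)"
    using nonneg grid_traj_step_in_grid_X[OF n] by (intro sum_ennreal) blast
  finally show ?thesis .
qed

lemma policy_value_jackpot_policy_ge:
  "ennreal (real (num_blocks n w) * (real w * real w / 2)) \<le> policy_value n (hard_instance n w)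
      (jackpot_policy n w)"
proof -
  let ?M = "rew_seq n (hard_instance n w)"
  have "ennreal (real (num_blocks n w) * (real w * real w / 2))
      \<le> ennreal (real (num_blocks n w) * (\<Sum>d\<in>{w..<2 * w}. real w * (real (w - 1) / real w)
        ^ (d - w)))"
    by (intro ennreal_leI mult_left_mono sum_geometric_ge[OF w]) auto
  also have "\<dots> = (\<integral>\<^sup>+\<omega>. (\<Sum>b<num_blocks n w. \<Sum>d\<in>{w..<2 * w}. \<Sum>e<w.
      ennreal (real (w * w)) * indicator (first_jackpot n w b d e) \<omega>) \<partial>?M)"
    by (rule nn_integral_first_jackpots[symmetric])
  also have "\<dots> \<le> policy_value n (hard_instance n w) (jackpot_policy n w)"
    unfolding policy_value_def
  proof (rule nn_integral_mono_AE)
    show "AE \<omega> in ?M. (\<Sum>b<num_blocks n w. \<Sum>d\<in>{w..<2 * w}. \<Sum>e<w.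
        ennreal (real (w * w)) * indicator (first_jackpot n w b d e) \<omega>)
        \<le> ennreal (\<Sum>h\<in>{1..horizon n}. jackpot_reward h \<omega>)"
      using AE_rew_seq_nonneg[OF hard_instance_reward_dists] AE_space
      by eventually_elim (rule first_jackpots_le_rewards)
  qed
  finally show ?thesis .
qed

end

subsection \<open>The two bounds\<close>

lemma num_blocks_bounds:
  assumes w: "1 \<le> w" and wn: "2 * w \<le> n - 1"
  shows "1 \<le> num_blocks n w" "n \<le> 4 * num_blocks n w * w"
proof -
  let ?B = "num_blocks n w"
  show B: "1 \<le> ?B" using w wn by (simp add: num_blocks_def div_greater_zero_iff Suc_le_eq)
  have "n - 1 = ?B * (2 * w) + (n - 1) mod (2 * w)"
    unfolding num_blocks_def by (rule div_mult_mod_eq[symmetric])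
  moreover have "(n - 1) mod (2 * w) < 2 * w" using w by simp
  ultimately have "n - 1 < (?B + 1) * (2 * w)" by (simp add: algebra_simps)
  also have "\<dots> \<le> (2 * ?B) * (2 * w)" using B by (intro mult_right_mono) auto
  finally have "n - 1 < 4 * ?B * w" by (simp add: algebra_simps)
  then show "n \<le> 4 * ?B * w" by arith
qed

lemma grid_CR_le_one:
  assumes n: "2 \<le> n" and L: "1 \<le> L"
  shows "grid_CR n L (\<lambda>_ _ _. 1) \<le> 1"
proof -
  have \<mu>: "hard_instance n 1 \<in> reward_dists n (\<lambda>_ _ _. 1)"
    by (rule hard_instance_reward_dists) (use n in simp_all)
  have "ennreal (real (horizon n)) \<le> opt_value n L (hard_instance n 1)"
    using opt_value_mono[of 0 L n "hard_instance n 1"] opt_value_markov[OF n \<mu>]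
    by (simp add: ennreal_of_nat_eq_real_of_nat)
  moreover have "0 < real (horizon n)" using n by (simp add: horizon_def)
  ultimately have "grid_CR n L (\<lambda>_ _ _. 1) \<le> ennreal (real (horizon n) / real (horizon n))"
    by (intro grid_CR_le[OF n L \<mu>])
  then show ?thesis using n by (simp add: horizon_def)
qed

lemma grid_CR_upper_bound:
  assumes n: "2 \<le> n" and L: "L \<in> {1..horizon n}"
  shows "grid_CR n L (\<lambda>_ _ _. 1) \<le> ennreal (128 / real L)"
proof (cases "L \<le> 4")
  case True
  then have "ennreal 1 \<le> ennreal (128 / real L)"
    using L by (intro ennreal_leI) (simp add: field_simps)
  moreover have "grid_CR n L (\<lambda>_ _ _. 1) \<le> ennreal 1"
    using grid_CR_le_one[OF n] L by simp
  ultimately show ?thesis by (rule order.trans[rotated])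
next
  case False
  define w where "w = (L - 1) div 4"
  define B where "B = num_blocks n w"
  have w: "1 \<le> w" "2 * w \<le> L" "L \<le> 8 * w"
    using False unfolding w_def by presburger+
  have "4 * w \<le> L - 1" unfolding w_def by simp
  moreover have "L \<le> 2 * n - 1" using L by (simp add: horizon_def)
  ultimately have "2 * w \<le> n - 1" by linarith
  then have B: "1 \<le> B" "n \<le> 4 * B * w"
    unfolding B_def by (rule num_blocks_bounds[OF w(1)])+
  have \<mu>: "hard_instance n w \<in> reward_dists n (\<lambda>_ _ _. 1)"
    by (rule hard_instance_reward_dists[OF n w(1)])
  have x: "0 < real B * (real w * real w / 2)" using B w by simp
  have "ennreal (real B * (real w * real w / 2)) \<le> policy_value n (hard_instance n w)
      (jackpot_policy n w)"
    unfolding B_def by (rule policy_value_jackpot_policy_ge[OF n w(1)])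
  also have "\<dots> \<le> opt_value n L (hard_instance n w)"
    unfolding opt_value_def by (rule SUP_upper[OF jackpot_policy_lookahead[OF n w(1,2)]])
  finally have "grid_CR n L (\<lambda>_ _ _. 1) \<le> ennreal (real (horizon n) / (real B * (real w *
      real w / 2)))"
    using L by (intro grid_CR_le[OF n _ \<mu> x]) auto
  also have "\<dots> \<le> ennreal (128 / real L)"
  proof (rule ennreal_leI)
    have "horizon n * L \<le> (8 * B * w) * (8 * w)"
      using B w by (intro mult_le_mono) (auto simp: horizon_def)
    then have "real (horizon n) * real L \<le> 64 * (real B * real w * real w)"
      by (simp only: of_nat_mult[symmetric] of_nat_le_iff mult.assoc)
    then show "real (horizon n) / (real B * (real w * real w / 2)) \<le> 128 / real L"
      using x L by (simp add: field_simps)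
  qed
  finally show ?thesis .
qed

theorem mainTheorem11:
  shows "\<exists>c1 c2 :: real. c1 > 0 \<and> c2 > 0 \<and>
    (\<forall>n L. 2 \<le> n \<longrightarrow> L \<in> {1..horizon n} \<longrightarrow>
       ennreal (c1 / real L) \<le> grid_CR n L (\<lambda>_ _ _. 1) \<and>
       grid_CR n L (\<lambda>_ _ _. 1) \<le> ennreal (c2 / real L))"
proof (intro exI conjI allI impI)
  fix n L :: nat
  assume n: "2 \<le> n" and L: "L \<in> {1..horizon n}"
  show "ennreal ((1 / 2) / real L) \<le> grid_CR n L (\<lambda>_ _ _. 1)"
    using grid_CR_lower_bound[OF n] L by simp
  show "grid_CR n L (\<lambda>_ _ _. 1) \<le> ennreal (128 / real L)"
    by (rule grid_CR_upper_bound[OF n L])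
qed simp_all

end
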